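(* In the setting below (ReLU approximation family $\mathcal N=(\mathcal N_M)_M$ in $L^p(\Omega\to(\mathbb R^{d_{\mathrm{out}}},\|\cdot\|),\mu)$ with $C_p(\Omega,\mu)<\infty$, $q\in[1,\infty]\cup\{F,\max\}$, depth bounds $L_M$ and norm bounds $r_M\ge1$), assume that for every $h>0$, $$L_M\,M\,(1+\log_2(r_M))=O(M^{1+h})\quad(M\to\infty).$$ Then $\mathcal N$ is $\infty$-encodable in $L^p(\Omega\to(\mathbb R^{d_{\mathrm{out}}},\|\cdot\|),\mu)$ (with the metric induced by $\|\cdot\|_{p,\|\cdot\|}$).
   Context: ReLU $\rho(x)=\max(0,x)$ coordinatewise; architecture $(L,\mathbf N)$, $\mathbf N=(N_0,\dots,N_L)$; parameters $\theta=(W_1,\dots,W_L,b_1,\dots,b_L)$, $W_\ell\in\mathbb R^{N_\ell\times N_{\ell-1}}$, $b_\ell\in\mathbb R^{N_\ell}$, forming $\Theta_{L,\mathbf N}\cong\mathbb R^{d_{L,\mathbf N}}$, $d_{L,\mathbf N}=\sum_\ell N_\ell(N_{\ell-1}+1)$; realization $R_\theta(x)=W_Ly_{L-1}(x)+b_L$, $y_0=x$, $y_\ell=\rho(W_\ell y_{\ell-1}+b_\ell)$ for $1\le\ell\le L-1$. Parameter sets: for $q\in[1,\infty]$, $\Theta^q_{L,\mathbf N}(r)=\{\theta:\|W_\ell\|_{q\to q}\le r,\|b_\ell\|_q\le r\ \forall\ell\}$ (operator norm); $\Theta^F_{L,\mathbf N}(r)$: $\|W_\ell\|_F\le r$, $\|b_\ell\|_2\le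 r$; $\Theta^{\max}_{L,\mathbf N}(r)$: all entries bounded by $r$ in absolute value. $\|f\|_{p,\|\cdot\|}=(\int_\Omega\|f\|^pd\mu)^{1/p}$ ($p<\infty$) or $\operatorname{ess\,sup}_\Omega\|f\|$; $C_p(\Omega,\mu)=(\int_\Omega(\|x\|_\infty+1)^pd\mu)^{1/p}$ ($p<\infty$) or $\operatorname{ess\,sup}_\Omega\|x\|_\infty$. $\mathcal A_M$: architectures with $L\le L_M$, $N_0=d_{\mathrm{in}}$, $N_L=d_{\mathrm{out}}$, $N_\ell\le M$ for $1\le\ell\le L-1$. $S^M_{L,\mathbf N}$: supports $S\subset\{1,\dots,d_{L,\mathbf N}\}$ with $|S|\le M$. $R_{\Theta,S}=\{R_\theta:\theta\in\Theta,\ \theta\text{ vanishes outside }S\}$. $\mathcal N_M=\bigcup_{(L,\mathbf N)\in\mathcal A_M}\bigcup_{S\in S^M_{L,\mathbf N}}R_{\Theta^q_{L,\mathbf N}(r_M),S}$. A finite $X\subset A$ is an $\varepsilon$-covering of $A$ if every point of $A$ is within distance $\varepsilon$ of a point of $X$. For $\gamma,h>0$, a $(\gamma,h)$-encoding of $\Sigma=(\Sigma_M)_M$ is a sequence $(\Sigma(\gamma,h)_M)_M$ such that for some $c_1,c_2>0$ and all $M$, $\Sigma(\gamma,h)_M$ is a $c_1M^{-\gamma}$-covering of $\Sigma_M$ with $\log_2|\Sigma(\gamma,h)_M|\le c_2M^{1+h}$; $\Sigma$ is $\gamma$-encodable if it admits a $(\gamma,h)$-encoding for every $h>0$, and $\infty$-encodable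 if $\gamma$-encodable for all $\gamma>0$. *)

theory Defs
  imports "HOL-Analysis.Analysis" "HOL-Library.Landau_Symbols"
begin

definition relu_vec :: "real list \<Rightarrow> real list" where
  "relu_vec x = map (\<lambda>t. max 0 t) x"

definition mat_vec :: "real list list \<Rightarrow> real list \<Rightarrow> real list" where
  "mat_vec W x = map (\<lambda>row. sum_list (map2 (*) row x)) W"

definition vadd :: "real list \<Rightarrow> real list \<Rightarrow> real list" where
  "vadd x y = map2 (+) x y"

fun net_eval :: "(real list list \<times> real list) list \<Rightarrow> real list \<Rightarrow> real list" where
  "net_eval [] x = x"
| "net_eval [(W, b)] x = vadd (mat_vec W x) b"
| "net_eval ((W, b) # l # ls) x = net_eval (l # ls) (relu_vec (vadd (mat_vec W x) b))"

text \<open>Architecture (L, N) with N = [N_0,...,N_L]; theta has the right shapes.\<close>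
definition params_of_arch :: "nat list \<Rightarrow> (real list list \<times> real list) list \<Rightarrow> bool" where
  "params_of_arch N \<theta> \<longleftrightarrow> length \<theta> + 1 = length N \<and>
     (\<forall>l < length \<theta>. length (fst (\<theta> ! l)) = N ! (Suc l) \<and>
        (\<forall>row \<in> set (fst (\<theta> ! l)). length row = N ! l) \<and>
        length (snd (\<theta> ! l)) = N ! (Suc l))"

text \<open>Parameter positions: weight entry (l,i,j) of W_{l+1}, bias entry (l,i) of b_{l+1}.\<close>
definition param_positions :: "nat list \<Rightarrow> ((nat \<times> nat \<times> nat) + (nat \<times> nat)) set" where
  "param_positions N =
     {Inl (l, i, j) | l i j. l + 1 < length N \<and> i < N ! (Suc l) \<and> j < N ! l} \<union>
     {Inr (l, i) | l i. l + 1 < length N \<and> i < N ! (Suc l)}"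

fun param_entry :: "(real list list \<times> real list) list \<Rightarrow> ((nat \<times> nat \<times> nat) + (nat \<times> nat)) \<Rightarrow> real" where
  "param_entry \<theta> (Inl (l, i, j)) = fst (\<theta> ! l) ! i ! j"
| "param_entry \<theta> (Inr (l, i)) = snd (\<theta> ! l) ! i"

definition vanishes_outside :: "nat list \<Rightarrow> (real list list \<times> real list) list \<Rightarrow> ((nat \<times> nat \<times> nat) + (nat \<times> nat)) set \<Rightarrow> bool" where
  "vanishes_outside N \<theta> S \<longleftrightarrow> (\<forall>pos \<in> param_positions N - S. param_entry \<theta> pos = 0)"

text \<open>The index q: Lq s (s \<in> [1,\<infinity>)), Linf (q = \<infinity>), Frob (Frobenius), Maxent (max entry).\<close>
datatype norm_kind = Lq real | Linf | Frob | Maxent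

definition valid_kind :: "norm_kind \<Rightarrow> bool" where
  "valid_kind q \<longleftrightarrow> (\<forall>s. q = Lq s \<longrightarrow> 1 \<le> s)"

definition linf_vec :: "real list \<Rightarrow> real" where
  "linf_vec x = foldr (\<lambda>a m. max \<bar>a\<bar> m) x 0"

definition lq_vec :: "real \<Rightarrow> real list \<Rightarrow> real" where
  "lq_vec s x = (sum_list (map (\<lambda>a. \<bar>a\<bar> powr s) x)) powr (1 / s)"

fun qnorm_vec :: "norm_kind \<Rightarrow> real list \<Rightarrow> real" where
  "qnorm_vec (Lq s) x = lq_vec s x"
| "qnorm_vec Linf x = linf_vec x"
| "qnorm_vec Frob x = lq_vec 2 x"
| "qnorm_vec Maxent x = linf_vec x"

definition op_norm :: "norm_kind \<Rightarrow> nat \<Rightarrow> real list list \<Rightarrow> real" where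
  "op_norm q n W = Sup {qnorm_vec q (mat_vec W x) | x. length x = n \<and> qnorm_vec q x \<le> 1}"

definition frob_norm :: "real list list \<Rightarrow> real" where
  "frob_norm W = sqrt (sum_list (map (\<lambda>row. sum_list (map (\<lambda>a. a\<^sup>2) row)) W))"

definition in_param_ball :: "norm_kind \<Rightarrow> nat list \<Rightarrow> real \<Rightarrow> (real list list \<times> real list) list \<Rightarrow> bool" where
  "in_param_ball q N r \<theta> \<longleftrightarrow> (\<forall>l < length \<theta>.
     (case q of
        Frob \<Rightarrow> frob_norm (fst (\<theta> ! l)) \<le> r \<and> lq_vec 2 (snd (\<theta> ! l)) \<le> r
      | Maxent \<Rightarrow> (\<forall>row \<in> set (fst (\<theta> ! l)). \<forall>a \<in> set row. \<bar>a\<bar> \<le> r) \<and>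
                  (\<forall>a \<in> set (snd (\<theta> ! l)). \<bar>a\<bar> \<le> r)
      | _ \<Rightarrow> op_norm q (N ! l) (fst (\<theta> ! l)) \<le> r \<and> qnorm_vec q (snd (\<theta> ! l)) \<le> r))"

definition enum_idx :: "nat \<Rightarrow> 'a::finite" where
  "enum_idx = (SOME f. bij_betw f {..<CARD('a)} (UNIV :: 'a set))"

definition vec_to_list :: "real ^ 'i \<Rightarrow> real list" where
  "vec_to_list x = map (\<lambda>k. x $ enum_idx k) [0..<CARD('i)]"

definition list_to_vec :: "real list \<Rightarrow> real ^ 'o" where
  "list_to_vec y = (\<chi> j. y ! (inv_into {..<CARD('o)} enum_idx j))"

definition realization :: "(real list list \<times> real list) list \<Rightarrow> real ^ 'i \<Rightarrow> real ^ 'o" where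
  "realization \<theta> x = list_to_vec (net_eval \<theta> (vec_to_list x))"

definition relu_family ::
  "norm_kind \<Rightarrow> (nat \<Rightarrow> nat) \<Rightarrow> (nat \<Rightarrow> real) \<Rightarrow> nat \<Rightarrow> (real ^ 'i \<Rightarrow> real ^ 'o) set" where
  "relu_family q LM r M =
     {realization \<theta> | \<theta> N S.
        length N \<ge> 2 \<and> length N - 1 \<le> LM M \<and>
        N ! 0 = CARD('i) \<and> N ! (length N - 1) = CARD('o) \<and>
        (\<forall>l. 1 \<le> l \<and> l < length N - 1 \<longrightarrow> 1 \<le> N ! l \<and> N ! l \<le> M) \<and>
        params_of_arch N \<theta> \<and> in_param_ball q N (r M) \<theta> \<and>
        S \<subseteq> param_positions N \<and> card S \<le> M \<and> vanishes_outside N \<theta> S}"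

definition is_norm_fun :: "('a::real_vector \<Rightarrow> real) \<Rightarrow> bool" where
  "is_norm_fun nrm \<longleftrightarrow> (\<forall>x. nrm x = 0 \<longleftrightarrow> x = 0) \<and> (\<forall>c x. nrm (c *\<^sub>R x) = \<bar>c\<bar> * nrm x) \<and>
     (\<forall>x y. nrm (x + y) \<le> nrm x + nrm y)"

definition ess_sup_enn :: "'a measure \<Rightarrow> ('a \<Rightarrow> ennreal) \<Rightarrow> ennreal" where
  "ess_sup_enn \<mu> g = Inf {c. AE x in \<mu>. g x \<le> c}"

definition lp_norm_enn :: "'a measure \<Rightarrow> ennreal \<Rightarrow> ('a \<Rightarrow> real) \<Rightarrow> ennreal" where
  "lp_norm_enn \<mu> p g =
     (if p = top then ess_sup_enn \<mu> (\<lambda>x. ennreal (g x))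
      else (let I = (\<integral>\<^sup>+ x. ennreal (g x powr enn2real p) \<partial>\<mu>) in
            if I = top then top else ennreal (enn2real I powr (1 / enn2real p))))"

definition lp_dist :: "'a measure \<Rightarrow> ennreal \<Rightarrow> ('b::real_vector \<Rightarrow> real) \<Rightarrow> ('a \<Rightarrow> 'b) \<Rightarrow> ('a \<Rightarrow> 'b) \<Rightarrow> ennreal" where
  "lp_dist \<mu> p nrm f g = lp_norm_enn \<mu> p (\<lambda>x. nrm (f x - g x))"

definition C_p :: "(real ^ 'i) measure \<Rightarrow> ennreal \<Rightarrow> ennreal" where
  "C_p \<mu> p = (if p = top then ess_sup_enn \<mu> (\<lambda>x. ennreal (infnorm x))
              else lp_norm_enn \<mu> p (\<lambda>x. infnorm x + 1))"

definition is_covering :: "('f \<Rightarrow> 'f \<Rightarrow> ennreal) \<Rightarrow> real \<Rightarrow> 'f set \<Rightarrow> 'f set \<Rightarrow> bool" where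
  "is_covering d \<epsilon> X A \<longleftrightarrow> finite X \<and> X \<subseteq> A \<and> (\<forall>f \<in> A. \<exists>g \<in> X. d f g \<le> ennreal \<epsilon>)"

definition is_encoding :: "('f \<Rightarrow> 'f \<Rightarrow> ennreal) \<Rightarrow> (nat \<Rightarrow> 'f set) \<Rightarrow> real \<Rightarrow> real \<Rightarrow> (nat \<Rightarrow> 'f set) \<Rightarrow> bool" where
  "is_encoding d \<Sigma> \<gamma> h E \<longleftrightarrow> (\<exists>c1 > 0. \<exists>c2 > 0. \<forall>M \<ge> 1.
      is_covering d (c1 * real M powr (- \<gamma>)) (E M) (\<Sigma> M) \<and>
      log 2 (real (card (E M))) \<le> c2 * real M powr (1 + h))"

definition gamma_encodable :: "('f \<Rightarrow> 'f \<Rightarrow> ennreal) \<Rightarrow> (nat \<Rightarrow> 'f set) \<Rightarrow> real \<Rightarrow> bool" where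
  "gamma_encodable d \<Sigma> \<gamma> \<longleftrightarrow> (\<forall>h > 0. \<exists>E. is_encoding d \<Sigma> \<gamma> h E)"

definition inf_encodable :: "('f \<Rightarrow> 'f \<Rightarrow> ennreal) \<Rightarrow> (nat \<Rightarrow> 'f set) \<Rightarrow> bool" where
  "inf_encodable d \<Sigma> \<longleftrightarrow> (\<forall>\<gamma> > 0. gamma_encodable d \<Sigma> \<gamma>)"

end

theory Submission
  imports Defs
begin

text \<open>A ReLU network whose parameters are bounded by \<open>R\<close> is Lipschitz in its parameters: if all
  entries of \<open>\<theta>\<close> and \<open>\<theta>'\<close> differ by at most \<open>\<delta>\<close>, the realizations differ pointwise by
  \<open>O(A\<^sup>L L \<delta> (\<parallel>x\<parallel>\<^sub>\<infinity> + 1))\<close> with \<open>A \<approx> W R\<close>, hence in \<open>L\<^sup>p\<close> by \<open>O(A\<^sup>L L \<delta>)\<close> since \<open>C\<^sub>p < \<infinity>\<close>.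
  Every norm ball bounds the entries by \<open>R\<close>, so rounding the at most \<open>M\<close> nonzero entries to a grid of
  mesh \<open>\<delta> \<approx> M\<^sup>-\<^sup>\<gamma> / (A\<^sup>L L)\<close> yields an \<open>M\<^sup>-\<^sup>\<gamma>\<close>-covering of \<open>\<N>\<^sub>M\<close>. Counting architectures, supports and
  grid points bounds the logarithm of its size by \<open>O(L M (1 + log R) log M)\<close>, which is
  \<open>O(M\<^sup>1\<^sup>+\<^sup>h)\<close> for every \<open>h > 0\<close> by the growth hypothesis.\<close>

section \<open>Perturbation of ReLU networks\<close>

lemma sum_list_map2_mult:
  "length u = n \<Longrightarrow> length v = n \<Longrightarrow> sum_list (map2 (*) u v) = (\<Sum>j<n. u!j * v!j)"
  by (simp add: sum_list_sum_nth lessThan_atLeast0)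

lemma length_mat_vec [simp]: "length (mat_vec W x) = length W"
  by (simp add: mat_vec_def)

lemma length_vadd [simp]: "length (vadd x y) = min (length x) (length y)"
  by (simp add: vadd_def)

lemma length_relu_vec [simp]: "length (relu_vec x) = length x"
  by (simp add: relu_vec_def)

lemma relu_vec_nth: "i < length x \<Longrightarrow> relu_vec x ! i = max 0 (x!i)"
  by (simp add: relu_vec_def)

lemma affine_nth:
  assumes "i < length W" "i < length b" "length (W!i) = n" "length x = n"
  shows "vadd (mat_vec W x) b ! i = (\<Sum>j<n. W!i!j * x!j) + b!i"
  using assms by (simp add: vadd_def mat_vec_def sum_list_map2_mult)

lemma net_eval_Cons:
  "\<theta> \<noteq> [] \<Longrightarrow> net_eval ((W, b) # \<theta>) x = net_eval \<theta> (relu_vec (vadd (mat_vec W x) b))"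
  by (cases \<theta>) auto

lemma affine_sum_abs_le:
  fixes w x :: "nat \<Rightarrow> real"
  assumes wx: "\<And>j. j < n \<Longrightarrow> \<bar>w j\<bar> \<le> R \<and> \<bar>x j\<bar> \<le> X" and c: "\<bar>c\<bar> \<le> R"
    and n: "real n \<le> W0" and W0: "1 \<le> W0" and R: "0 \<le> R" and X: "0 \<le> X"
  shows "\<bar>(\<Sum>j<n. w j * x j) + c\<bar> \<le> (W0*R + W0 + 1) * (X + 1) - 1"
proof -
  have "\<bar>\<Sum>j<n. w j * x j\<bar> \<le> (\<Sum>j<n. \<bar>w j\<bar> * \<bar>x j\<bar>)"
    by (simp add: abs_mult [symmetric] sum_abs)
  also have "\<dots> \<le> (\<Sum>j<n. R * X)"
    using wx R by (intro sum_mono mult_mono) auto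
  also have "\<dots> \<le> W0 * R * X"
    using mult_right_mono[OF n, of "R * X"] R X by (simp add: mult.assoc)
  finally have "\<bar>\<Sum>j<n. w j * x j\<bar> \<le> W0 * R * X" .
  moreover have "R \<le> W0 * R" "0 \<le> W0 * X"
    using W0 R X by (simp_all add: mult_le_cancel_right1)
  moreover have "(W0*R + W0 + 1) * (X + 1) - 1 = W0*R*X + W0*R + W0*X + W0 + X"
    by (simp add: algebra_simps)
  ultimately show ?thesis
    using c W0 X abs_triangle_ineq[of "\<Sum>j<n. w j * x j" c] by linarith
qed

lemma affine_sum_diff_le:
  fixes w w' x x' :: "nat \<Rightarrow> real"
  assumes wx: "\<And>j. j < n \<Longrightarrow> \<bar>w' j\<bar> \<le> R \<and> \<bar>w j - w' j\<bar> \<le> \<delta> \<and> \<bar>x j\<bar> \<le> X \<and> \<bar>x j - x' j\<bar> \<le> D"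
    and c: "\<bar>c - c'\<bar> \<le> \<delta>"
    and n: "real n \<le> W0" and W0: "1 \<le> W0" and R: "0 \<le> R" and X: "0 \<le> X" and D: "0 \<le> D"
    and \<delta>: "0 \<le> \<delta>"
  shows "\<bar>((\<Sum>j<n. w j * x j) + c) - ((\<Sum>j<n. w' j * x' j) + c')\<bar>
           \<le> (W0*R + W0 + 1) * D + (W0*R + W0 + 1) * \<delta> * (X + 1)"
proof -
  have "\<bar>(\<Sum>j<n. w j * x j) - (\<Sum>j<n. w' j * x' j)\<bar>
          = \<bar>\<Sum>j<n. w' j * (x j - x' j) + (w j - w' j) * x j\<bar>"
    by (simp add: sum_subtractf[symmetric] algebra_simps)
  also have "\<dots> \<le> (\<Sum>j<n. \<bar>w' j\<bar> * \<bar>x j - x' j\<bar> + \<bar>w j - w' j\<bar> * \<bar>x j\<bar>)"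
    by (intro order_trans[OF sum_abs] sum_mono) (simp add: abs_mult [symmetric] abs_triangle_ineq)
  also have "\<dots> \<le> (\<Sum>j<n. R * D + \<delta> * X)"
    using wx R \<delta> by (intro sum_mono add_mono mult_mono) auto
  also have "\<dots> \<le> W0 * (R * D + \<delta> * X)"
    using mult_right_mono[OF n, of "R * D + \<delta> * X"] R D \<delta> X by simp
  finally have "\<bar>(\<Sum>j<n. w j * x j) - (\<Sum>j<n. w' j * x' j)\<bar> \<le> W0 * (R * D + \<delta> * X)" .
  moreover have "0 \<le> W0*\<delta>" "0 \<le> \<delta>*X" "0 \<le> W0*\<delta>*X" "0 \<le> W0*R*\<delta>*X" "0 \<le> W0*R*\<delta>" "0 \<le> W0*D"
    using W0 R X D \<delta> by auto
  moreover have "(W0*R + W0 + 1) * D + (W0*R + W0 + 1) * \<delta> * (X + 1)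
      = W0*(R*D + \<delta>*X) + \<delta> + (W0*D + D + W0*R*\<delta>*X + W0*R*\<delta> + W0*\<delta> + \<delta>*X)"
    by (simp add: algebra_simps)
  ultimately show ?thesis
    using c D abs_diff_triangle_ineq[of "\<Sum>j<n. w j * x j" c "\<Sum>j<n. w' j * x' j" c']
    by linarith
qed

definition layer_close ::
  "nat \<Rightarrow> nat \<Rightarrow> real \<Rightarrow> real \<Rightarrow> real list list \<times> real list \<Rightarrow> real list list \<times> real list \<Rightarrow> bool" where
  "layer_close n n' R \<delta> wb wb' \<longleftrightarrow>
     length (fst wb) = n' \<and> length (fst wb') = n' \<and> length (snd wb) = n' \<and> length (snd wb') = n' \<and>
     (\<forall>i<n'. length (fst wb ! i) = n \<and> length (fst wb' ! i) = n \<and>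
        (\<forall>j<n. \<bar>fst wb!i!j\<bar> \<le> R \<and> \<bar>fst wb'!i!j\<bar> \<le> R \<and> \<bar>fst wb!i!j - fst wb'!i!j\<bar> \<le> \<delta>) \<and>
        \<bar>snd wb!i\<bar> \<le> R \<and> \<bar>snd wb!i - snd wb'!i\<bar> \<le> \<delta>)"

lemma layer_close_affine:
  fixes W0 R \<delta> X D :: real
  assumes close: "layer_close n n' R \<delta> (W, b) (W', b')"
    and x: "length x = n" "length x' = n" "\<And>j. j < n \<Longrightarrow> \<bar>x!j\<bar> \<le> X \<and> \<bar>x!j - x'!j\<bar> \<le> D"
    and n: "real n \<le> W0" and W0: "1 \<le> W0" and R: "0 \<le> R" and X: "0 \<le> X" and D: "0 \<le> D"
    and \<delta>: "0 \<le> \<delta>" and i: "i < n'"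
  shows "\<bar>vadd (mat_vec W x) b ! i\<bar> \<le> (W0*R + W0 + 1) * (X + 1) - 1"
    and "\<bar>vadd (mat_vec W x) b ! i - vadd (mat_vec W' x') b' ! i\<bar>
           \<le> (W0*R + W0 + 1) * D + (W0*R + W0 + 1) * \<delta> * (X + 1)"
proof -
  have lengths: "i < length W" "i < length b" "length (W!i) = n"
      "i < length W'" "i < length b'" "length (W'!i) = n"
    and entries: "\<And>j. j < n \<Longrightarrow> \<bar>W!i!j\<bar> \<le> R \<and> \<bar>W'!i!j\<bar> \<le> R \<and> \<bar>W!i!j - W'!i!j\<bar> \<le> \<delta>"
    and bias: "\<bar>b!i\<bar> \<le> R" "\<bar>b!i - b'!i\<bar> \<le> \<delta>"
    using close i by (auto simp: layer_close_def)
  have eq: "vadd (mat_vec W x) b ! i = (\<Sum>j<n. W!i!j * x!j) + b!i"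
      "vadd (mat_vec W' x') b' ! i = (\<Sum>j<n. W'!i!j * x'!j) + b'!i"
    using lengths x by (simp_all add: affine_nth)
  show "\<bar>vadd (mat_vec W x) b ! i\<bar> \<le> (W0*R + W0 + 1) * (X + 1) - 1"
    unfolding eq using entries x(3) bias n W0 R X by (intro affine_sum_abs_le) auto
  show "\<bar>vadd (mat_vec W x) b ! i - vadd (mat_vec W' x') b' ! i\<bar>
          \<le> (W0*R + W0 + 1) * D + (W0*R + W0 + 1) * \<delta> * (X + 1)"
    unfolding eq using entries x(3) bias n W0 R X D \<delta> by (intro affine_sum_diff_le) auto
qed

lemma layer_close_relu:
  fixes W0 R \<delta> X D :: real
  assumes close: "layer_close n n' R \<delta> (W, b) (W', b')"
    and x: "length x = n" "length x' = n" "\<And>j. j < n \<Longrightarrow> \<bar>x!j\<bar> \<le> X \<and> \<bar>x!j - x'!j\<bar> \<le> D"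
    and n: "real n \<le> W0" and W0: "1 \<le> W0" and R: "0 \<le> R" and X: "0 \<le> X" and D: "0 \<le> D"
    and \<delta>: "0 \<le> \<delta>" and i: "i < n'"
  shows "\<bar>relu_vec (vadd (mat_vec W x) b) ! i\<bar> \<le> (W0*R + W0 + 1) * (X + 1) - 1 \<and>
    \<bar>relu_vec (vadd (mat_vec W x) b) ! i - relu_vec (vadd (mat_vec W' x') b') ! i\<bar>
      \<le> (W0*R + W0 + 1) * D + (W0*R + W0 + 1) * \<delta> * (X + 1)"
proof -
  have "i < length (vadd (mat_vec W x) b)" "i < length (vadd (mat_vec W' x') b')"
    using close i by (auto simp: layer_close_def)
  then show ?thesis
    using layer_close_affine[OF assms] by (simp add: relu_vec_nth) linarith
qed

text \<open>The bound \<open>X\<close> on the inputs and the perturbation \<open>D\<close> propagate through a layer as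
  \<open>X + 1 \<mapsto> A (X + 1)\<close> and \<open>D \<mapsto> A (D + \<delta> (X + 1))\<close> (ReLU is 1-Lipschitz and shrinks moduli),
  which telescopes to the bound below.\<close>

lemma net_eval_perturbation:
  fixes W0 R \<delta> X D :: real
  assumes W0: "1 \<le> W0" and R: "0 \<le> R" and \<delta>: "0 \<le> \<delta>"
    and "length \<theta>' = length \<theta>" "length N = length \<theta> + 1"
    and "\<forall>l<length \<theta>. layer_close (N!l) (N!Suc l) R \<delta> (\<theta>!l) (\<theta>'!l)"
    and "\<forall>l<length N. real (N!l) \<le> W0"
    and "length x = N!0" "length x' = N!0" "\<forall>j<N!0. \<bar>x!j\<bar> \<le> X \<and> \<bar>x!j - x'!j\<bar> \<le> D"
    and "0 \<le> X" "0 \<le> D"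
  shows "length (net_eval \<theta> x) = N ! length \<theta> \<and> length (net_eval \<theta>' x') = N ! length \<theta> \<and>
    (\<forall>i < N ! length \<theta>. \<bar>net_eval \<theta> x ! i - net_eval \<theta>' x' ! i\<bar>
       \<le> (W0*R + W0 + 1) ^ length \<theta> * (D + length \<theta> * \<delta> * (X + 1)))"
  using assms(4-)
proof (induction \<theta> arbitrary: \<theta>' N x x' X D)
  case Nil
  then show ?case by (cases \<theta>') auto
next
  case (Cons wb \<theta>)
  define A where "A = W0*R + W0 + 1"
  have A: "1 \<le> A" using W0 R by (simp add: A_def)
  obtain W b where wb: "wb = (W, b)" by (cases wb)
  obtain W' b' \<theta>'' where \<theta>': "\<theta>' = (W', b') # \<theta>''" using Cons.prems(1) by (cases \<theta>') auto
  obtain n0 n1 Ns where N: "N = n0 # n1 # Ns" using Cons.prems(2)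
    by (metis Suc_eq_plus1 length_Cons list.exhaust list.size(3) nat.distinct(1) nat.inject)
  have close: "layer_close n0 n1 R \<delta> (W, b) (W', b')" using Cons.prems(3) wb \<theta>' N by force
  have len: "length (vadd (mat_vec W x) b) = n1" "length (vadd (mat_vec W' x') b') = n1"
    using close by (auto simp: layer_close_def)
  have layer: "real n0 \<le> W0" "length x = n0" "length x' = n0"
      "\<And>j. j < n0 \<Longrightarrow> \<bar>x!j\<bar> \<le> X \<and> \<bar>x!j - x'!j\<bar> \<le> D"
    using Cons.prems(4-7) N by auto
  show ?case
  proof (cases "\<theta> = []")
    case True
    then have "\<theta>'' = []" using Cons.prems(1) \<theta>' by simp
    then show ?thesis
      using True \<theta>' wb N len layer_close_affine(2)[OF close layer(2-4,1) W0 R Cons.prems(8,9) \<delta>]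
      by (simp add: A_def algebra_simps)
  next
    case False
    then have "\<theta>'' \<noteq> []" using Cons.prems(1) \<theta>' by auto
    then have eval: "net_eval (wb # \<theta>) x = net_eval \<theta> (relu_vec (vadd (mat_vec W x) b))"
        "net_eval \<theta>' x' = net_eval \<theta>'' (relu_vec (vadd (mat_vec W' x') b'))"
      using False wb \<theta>' by (simp_all add: net_eval_Cons)
    have "0 \<le> A*(X+1) - 1"
      using A \<open>0 \<le> X\<close> mult_mono[OF A, of 1 "X+1"] by simp
    moreover have "0 \<le> A*D + A*\<delta>*(X+1)" using A \<open>0 \<le> X\<close> \<open>0 \<le> D\<close> \<delta> by simp
    ultimately have IH: "length (net_eval \<theta> (relu_vec (vadd (mat_vec W x) b))) = (n1#Ns) ! length \<theta> \<and>
        length (net_eval \<theta>'' (relu_vec (vadd (mat_vec W' x') b'))) = (n1#Ns) ! length \<theta> \<and>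
        (\<forall>i < (n1#Ns) ! length \<theta>. \<bar>net_eval \<theta> (relu_vec (vadd (mat_vec W x) b)) ! i
            - net_eval \<theta>'' (relu_vec (vadd (mat_vec W' x') b')) ! i\<bar>
           \<le> A ^ length \<theta> * ((A*D + A*\<delta>*(X+1)) + length \<theta> * \<delta> * ((A*(X+1) - 1) + 1)))"
      unfolding A_def using Cons.prems(1-4) len N \<theta>'
        layer_close_relu[OF close layer(2-4,1) W0 R Cons.prems(8,9) \<delta>]
      by (intro Cons.IH) (auto simp: nth_Cons_Suc simp del: nth_Cons)
    have telescope: "A ^ length \<theta> * ((A*D + A*\<delta>*(X+1)) + length \<theta> * \<delta> * ((A*(X+1) - 1) + 1))
        = A ^ length (wb # \<theta>) * (D + length (wb # \<theta>) * \<delta> * (X + 1))"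
      by (simp add: algebra_simps)
    show ?thesis using IH unfolding eval A_def[symmetric] telescope by (simp add: N)
  qed
qed

section \<open>Parameter norms bound the entries\<close>

lemma sum_list_le_length_mult:
  fixes xs :: "real list" and B :: real
  shows "(\<And>a. a \<in> set xs \<Longrightarrow> a \<le> B) \<Longrightarrow> sum_list xs \<le> length xs * B"
proof (induction xs)
  case (Cons a xs)
  then have "a \<le> B" "sum_list xs \<le> length xs * B" by auto
  then show ?case by (simp add: algebra_simps)
qed simp

lemma lq_vec_nth_le:
  assumes "0 < s" "i < length x"
  shows "\<bar>x!i\<bar> \<le> lq_vec s x"
proof -
  have "\<bar>x!i\<bar> powr s \<le> sum_list (map (\<lambda>a. \<bar>a\<bar> powr s) x)"
    using assms by (intro member_le_sum_list) auto
  then have "(\<bar>x!i\<bar> powr s) powr (1/s) \<le> sum_list (map (\<lambda>a. \<bar>a\<bar> powr s) x) powr (1/s)"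
    using assms by (intro powr_mono2) auto
  then show ?thesis using assms by (simp add: lq_vec_def powr_powr)
qed

lemma lq_vec_le:
  fixes B :: real
  assumes "1 \<le> s" "\<And>a. a \<in> set x \<Longrightarrow> \<bar>a\<bar> \<le> B" "0 \<le> B"
  shows "lq_vec s x \<le> (length x + 1) * B"
proof -
  have "sum_list (map (\<lambda>a. \<bar>a\<bar> powr s) x) \<le> length x * B powr s"
    using assms by (intro sum_list_le_length_mult[where xs = "map _ x", simplified]) (auto intro: powr_mono2)
  also have "\<dots> \<le> real (length x + 1) powr s * B powr s"
  proof -
    have "real (length x) \<le> real (length x + 1) powr 1" by simp
    also have "\<dots> \<le> real (length x + 1) powr s" using assms by (intro powr_mono) auto
    finally show ?thesis by (intro mult_right_mono) auto
  qed
  also have "\<dots> = (real (length x + 1) * B) powr s" using assms by (simp add: powr_mult)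
  finally have "sum_list (map (\<lambda>a. \<bar>a\<bar> powr s) x) powr (1/s) \<le> (((length x + 1) * B) powr s) powr (1/s)"
    using assms by (intro powr_mono2) (auto intro!: sum_list_nonneg)
  then show ?thesis using assms by (simp add: lq_vec_def powr_powr)
qed

lemma linf_vec_nth_le: "i < length x \<Longrightarrow> \<bar>x!i\<bar> \<le> linf_vec x"
proof (induction x arbitrary: i)
  case (Cons a x)
  then show ?case by (cases i) (auto simp: linf_vec_def intro: le_max_iff_disj[THEN iffD2])
qed simp

lemma linf_vec_le: fixes B :: real shows "(\<And>a. a \<in> set x \<Longrightarrow> \<bar>a\<bar> \<le> B) \<Longrightarrow> 0 \<le> B \<Longrightarrow> linf_vec x \<le> B"
  by (induction x) (auto simp: linf_vec_def)

lemma qnorm_vec_nth_le: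
  "valid_kind q \<Longrightarrow> i < length x \<Longrightarrow> \<bar>x!i\<bar> \<le> qnorm_vec q x"
  by (cases q) (auto simp: valid_kind_def intro: lq_vec_nth_le linf_vec_nth_le)

lemma qnorm_vec_le:
  fixes B :: real
  assumes "valid_kind q" "\<And>a. a \<in> set x \<Longrightarrow> \<bar>a\<bar> \<le> B" "0 \<le> B"
  shows "qnorm_vec q x \<le> (length x + 1) * B"
proof -
  have "B \<le> (length x + 1) * B" using assms(3) by (simp add: algebra_simps)
  then have "linf_vec x \<le> (length x + 1) * B"
    using linf_vec_le[of x B] assms(2,3) by simp
  moreover have "lq_vec s x \<le> (length x + 1) * B" if "1 \<le> s" for s
    using lq_vec_le[OF that assms(2,3)] .
  ultimately show ?thesis
    using assms(1) by (cases q) (auto simp: valid_kind_def)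
qed

definition unit_list :: "nat \<Rightarrow> nat \<Rightarrow> real list" where
  "unit_list n j = map (\<lambda>k. if k = j then 1 else 0) [0..<n]"

lemma qnorm_vec_unit_list:
  assumes "valid_kind q" "j < n"
  shows "qnorm_vec q (unit_list n j) = 1"
proof -
  have "lq_vec s (unit_list n j) = 1" if "1 \<le> s" for s
  proof -
    have "map (\<lambda>a. \<bar>a\<bar> powr s) (unit_list n j) = unit_list n j"
      using that by (auto simp: unit_list_def)
    moreover have "sum_list (unit_list n j) = 1"
      using assms(2) by (simp add: unit_list_def sum_list_sum_nth)
    ultimately show ?thesis by (simp add: lq_vec_def)
  qed
  moreover have "linf_vec (unit_list n j) = 1"
  proof (rule antisym)
    show "linf_vec (unit_list n j) \<le> 1" by (rule linf_vec_le) (auto simp: unit_list_def)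
    show "1 \<le> linf_vec (unit_list n j)"
      using linf_vec_nth_le[of j "unit_list n j"] assms(2) by (simp add: unit_list_def)
  qed
  ultimately show ?thesis using assms(1) by (cases q) (auto simp: valid_kind_def)
qed

lemma mat_vec_unit_list:
  assumes "i < length W" "length (W!i) = n" "j < n"
  shows "mat_vec W (unit_list n j) ! i = W!i!j"
proof -
  have "mat_vec W (unit_list n j) ! i = (\<Sum>k<n. W!i!k * unit_list n j ! k)"
    using assms by (simp add: mat_vec_def sum_list_map2_mult unit_list_def)
  also have "\<dots> = (\<Sum>k<n. if k = j then W!i!j else 0)"
    by (rule sum.cong) (auto simp: unit_list_def)
  finally show ?thesis using assms by simp
qed

lemma bdd_above_op_norm_set:
  assumes q: "valid_kind q" and rows: "\<And>row. row \<in> set W \<Longrightarrow> length row = n"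
  shows "bdd_above {qnorm_vec q (mat_vec W x) | x. length x = n \<and> qnorm_vec q x \<le> 1}"
proof -
  define B where "B = sum_list (map (\<lambda>row. sum_list (map abs row)) W)"
  have B: "0 \<le> B" unfolding B_def by (auto intro!: sum_list_nonneg)
  have "\<bar>a\<bar> \<le> B" if x: "length x = n" "qnorm_vec q x \<le> 1" and a: "a \<in> set (mat_vec W x)" for x a
  proof -
    obtain i where i: "i < length W" "a = mat_vec W x ! i"
      using a by (auto simp: in_set_conv_nth)
    have row: "length (W!i) = n" using rows i by auto
    have "\<bar>a\<bar> = \<bar>\<Sum>k<n. W!i!k * x!k\<bar>"
      using i row x by (simp add: mat_vec_def sum_list_map2_mult)
    also have "\<dots> \<le> (\<Sum>k<n. \<bar>W!i!k\<bar>)"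
    proof (intro order_trans[OF sum_abs] sum_mono)
      fix k assume "k \<in> {..<n}"
      then have "\<bar>x!k\<bar> \<le> 1" using qnorm_vec_nth_le[OF q, of k x] x by simp
      then show "\<bar>W!i!k * x!k\<bar> \<le> \<bar>W!i!k\<bar>" by (simp add: abs_mult mult_left_le)
    qed
    also have "\<dots> = sum_list (map abs (W!i))"
      using row by (simp add: sum_list_sum_nth lessThan_atLeast0)
    also have "\<dots> \<le> B"
      unfolding B_def using i by (intro member_le_sum_list) (auto intro!: sum_list_nonneg)
    finally show ?thesis .
  qed
  then have bound: "qnorm_vec q (mat_vec W x) \<le> (length W + 1) * B"
    if "length x = n" "qnorm_vec q x \<le> 1" for x
    using qnorm_vec_le[OF q _ B, of "mat_vec W x"] that by simp
  show ?thesis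
  proof (rule bdd_aboveI)
    fix v assume "v \<in> {qnorm_vec q (mat_vec W x) | x. length x = n \<and> qnorm_vec q x \<le> 1}"
    then obtain x where "v = qnorm_vec q (mat_vec W x)" "length x = n" "qnorm_vec q x \<le> 1"
      by blast
    then show "v \<le> (length W + 1) * B" using bound by simp
  qed
qed

lemma op_norm_entry_le:
  assumes q: "valid_kind q" and rows: "\<And>row. row \<in> set W \<Longrightarrow> length row = n"
    and i: "i < length W" and j: "j < n"
  shows "\<bar>W!i!j\<bar> \<le> op_norm q n W"
proof -
  have "\<bar>W!i!j\<bar> = \<bar>mat_vec W (unit_list n j) ! i\<bar>"
    using mat_vec_unit_list[OF i _ j] rows i by simp
  also have "\<dots> \<le> qnorm_vec q (mat_vec W (unit_list n j))"
    using qnorm_vec_nth_le[OF q] i by simp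
  also have "\<dots> \<le> op_norm q n W"
    unfolding op_norm_def using qnorm_vec_unit_list[OF q j]
    by (intro cSup_upper bdd_above_op_norm_set[OF q rows]) (auto simp: unit_list_def)
  finally show ?thesis .
qed

lemma frob_norm_entry_le:
  assumes "i < length W" "j < length (W!i)"
  shows "\<bar>W!i!j\<bar> \<le> frob_norm W"
proof -
  have "(W!i!j)\<^sup>2 \<le> sum_list (map (\<lambda>a. a\<^sup>2) (W!i))"
    using assms by (intro member_le_sum_list) auto
  also have "\<dots> \<le> sum_list (map (\<lambda>row. sum_list (map (\<lambda>a. a\<^sup>2) row)) W)"
    using assms by (intro member_le_sum_list) (auto intro!: sum_list_nonneg)
  finally show ?thesis
    unfolding frob_norm_def by (metis real_sqrt_abs real_sqrt_le_mono)
qed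

lemma layer_entry_abs_le:
  assumes arch: "params_of_arch N \<theta>" and ball: "in_param_ball q N R \<theta>" and q: "valid_kind q"
    and l: "l < length \<theta>" and i: "i < N ! Suc l"
  shows "j < N!l \<Longrightarrow> \<bar>fst (\<theta>!l) ! i ! j\<bar> \<le> R" and "\<bar>snd (\<theta>!l) ! i\<bar> \<le> R"
proof -
  let ?W = "fst (\<theta>!l)" and ?b = "snd (\<theta>!l)"
  have shape: "length ?W = N ! Suc l" "\<And>row. row \<in> set ?W \<Longrightarrow> length row = N!l"
      "length ?b = N ! Suc l"
    using arch l unfolding params_of_arch_def by auto
  have norms: "case q of Frob \<Rightarrow> frob_norm ?W \<le> R \<and> lq_vec 2 ?b \<le> R
      | Maxent \<Rightarrow> (\<forall>row \<in> set ?W. \<forall>a \<in> set row. \<bar>a\<bar> \<le> R) \<and> (\<forall>a \<in> set ?b. \<bar>a\<bar> \<le> R)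
      | _ \<Rightarrow> op_norm q (N!l) ?W \<le> R \<and> qnorm_vec q ?b \<le> R"
    using ball l unfolding in_param_ball_def by auto
  have i': "i < length ?W" "i < length ?b" using shape i by auto
  have row: "length (?W ! i) = N!l" using shape(2) i'(1) by simp
  consider "q = Frob" | "q = Maxent" | "op_norm q (N!l) ?W \<le> R \<and> qnorm_vec q ?b \<le> R"
    using norms by (cases q) auto
  then have "(j < N!l \<longrightarrow> \<bar>?W ! i ! j\<bar> \<le> R) \<and> \<bar>?b ! i\<bar> \<le> R"
  proof cases
    case 1
    then have "frob_norm ?W \<le> R" "lq_vec 2 ?b \<le> R" using norms by simp_all
    then show ?thesis
      using frob_norm_entry_le[OF i'(1), of j] lq_vec_nth_le[of 2 i ?b] i' row by auto
  next
    case 2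
    then have "\<forall>row \<in> set ?W. \<forall>a \<in> set row. \<bar>a\<bar> \<le> R" "\<forall>a \<in> set ?b. \<bar>a\<bar> \<le> R"
      using norms by simp_all
    moreover have "?W ! i \<in> set ?W" "?b ! i \<in> set ?b" using i' by simp_all
    moreover have "j < N!l \<Longrightarrow> ?W ! i ! j \<in> set (?W ! i)" using row by simp
    ultimately show ?thesis by blast
  next
    case 3
    then show ?thesis
      using op_norm_entry_le[OF q shape(2) i'(1), of j] qnorm_vec_nth_le[OF q i'(2)] by auto
  qed
  then show "j < N!l \<Longrightarrow> \<bar>?W ! i ! j\<bar> \<le> R" and "\<bar>?b ! i\<bar> \<le> R" by auto
qed

lemma param_entry_abs_le:
  assumes arch: "params_of_arch N \<theta>" and ball: "in_param_ball q N R \<theta>" and q: "valid_kind q"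
    and pos: "pos \<in> param_positions N"
  shows "\<bar>param_entry \<theta> pos\<bar> \<le> R"
proof -
  have len: "length \<theta> + 1 = length N" using arch by (simp add: params_of_arch_def)
  from pos consider
      (weight) l i j where "pos = Inl (l, i, j)" "l + 1 < length N" "i < N ! Suc l" "j < N ! l"
    | (bias) l i where "pos = Inr (l, i)" "l + 1 < length N" "i < N ! Suc l"
    unfolding param_positions_def by blast
  then show ?thesis
  proof cases
    case weight
    then show ?thesis using layer_entry_abs_le(1)[OF arch ball q, of l i j] len by simp
  next
    case bias
    then show ?thesis using layer_entry_abs_le(2)[OF arch ball q, of l i] len by simp
  qed
qed

section \<open>Perturbation in \<open>L\<^sup>p\<close>\<close>

lemma lp_norm_enn_top_le:
  fixes \<mu> :: "(real ^ 'i) measure" and g :: "real ^ 'i \<Rightarrow> real"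
  assumes Cp: "C_p \<mu> top < top" and c: "0 \<le> c" and g: "\<And>x. g x \<le> c * (infnorm x + 1)"
  shows "lp_norm_enn \<mu> top g \<le> ennreal (c * (enn2real (C_p \<mu> top) + 2))"
proof -
  define s where "s = enn2real (C_p \<mu> top)"
  have "C_p \<mu> top \<noteq> top" using Cp by simp
  then have "C_p \<mu> top < ennreal (s + 1)"
    by (simp add: s_def ennreal_enn2real_if ennreal_lessI add_nonneg_pos flip: less_top)
  then have "Inf {c. AE x in \<mu>. ennreal (infnorm x) \<le> c} < ennreal (s + 1)"
    by (simp add: C_p_def ess_sup_enn_def)
  then obtain c0 where c0: "AE x in \<mu>. ennreal (infnorm x) \<le> c0" "c0 < ennreal (s + 1)"
    unfolding Inf_less_iff by auto
  have "AE x in \<mu>. ennreal (g x) \<le> ennreal (c * (s + 2))"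
    using c0(1)
  proof eventually_elim
    case (elim x)
    then have "ennreal (infnorm x) \<le> ennreal (s + 1)"
      using c0(2) by (meson less_imp_le order_trans)
    then have "infnorm x \<le> s + 1" by (subst (asm) ennreal_le_iff) (simp_all add: s_def)
    then have "c * (infnorm x + 1) \<le> c * (s + 2)" using c by (intro mult_left_mono) auto
    then show ?case using g[of x] by (intro ennreal_leI) linarith
  qed
  then show ?thesis
    unfolding lp_norm_enn_def ess_sup_enn_def s_def by (auto intro: Inf_lower)
qed

lemma infnorm_plus_one_powr_measurable:
  fixes \<mu> :: "(real ^ 'i) measure"
  assumes sets: "sets \<mu> = sets (restrict_space borel (space \<mu>))"
  shows "(\<lambda>x. ennreal ((infnorm x + 1) powr s)) \<in> borel_measurable \<mu>"
proof -
  have "(\<lambda>x::real ^ 'i. infnorm x + 1) \<in> borel_measurable borel"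
    by (intro borel_measurable_continuous_onI continuous_intros continuous_on_infnorm)
  then have "(\<lambda>x::real ^ 'i. infnorm x + 1) \<in> borel_measurable \<mu>"
    unfolding measurable_cong_sets[OF sets refl] by (rule measurable_restrict_space1)
  then show ?thesis by (rule measurable_compose) measurable
qed

lemma lp_norm_enn_finite_le:
  fixes \<mu> :: "(real ^ 'i) measure" and g :: "real ^ 'i \<Rightarrow> real"
  assumes sets: "sets \<mu> = sets (restrict_space borel (space \<mu>))"
    and p: "1 \<le> p" "p \<noteq> top" and Cp: "C_p \<mu> p < top" and c: "0 \<le> c"
    and g: "\<And>x. 0 \<le> g x \<and> g x \<le> c * (infnorm x + 1)"
  shows "lp_norm_enn \<mu> p g \<le> ennreal (c * enn2real (C_p \<mu> p))"
proof -
  define s where "s = enn2real p"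
  have "p = ennreal s" using p(2) by (simp add: s_def ennreal_enn2real_if)
  then have s: "1 \<le> s" using p(1) by (simp add: ennreal_le_iff[symmetric])
  define h where "h = (\<lambda>x::real^'i. infnorm x + 1)"
  have h_meas: "(\<lambda>x. ennreal (h x powr s)) \<in> borel_measurable \<mu>"
    unfolding h_def by (rule infnorm_plus_one_powr_measurable[OF sets])
  define Ih where "Ih = (\<integral>\<^sup>+ x. ennreal (h x powr s) \<partial>\<mu>)"
  define Ig where "Ig = (\<integral>\<^sup>+ x. ennreal (g x powr s) \<partial>\<mu>)"
  have Cp_eq: "C_p \<mu> p = (if Ih = top then top else ennreal (enn2real Ih powr (1 / s)))"
    using p unfolding C_p_def lp_norm_enn_def Ih_def h_def s_def by (simp add: Let_def)
  then have Ih: "Ih \<noteq> top" using Cp by (auto split: if_splits)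
  have "Ig \<le> (\<integral>\<^sup>+ x. ennreal (c powr s) * ennreal (h x powr s) \<partial>\<mu>)"
    unfolding Ig_def
  proof (rule nn_integral_mono)
    fix x
    have "g x powr s \<le> (c * (infnorm x + 1)) powr s"
      using g[of x] s by (intro powr_mono2) auto
    also have "\<dots> = c powr s * h x powr s"
      using c by (simp add: powr_mult h_def infnorm_pos_le)
    finally show "ennreal (g x powr s) \<le> ennreal (c powr s) * ennreal (h x powr s)"
      by (simp add: ennreal_mult'[symmetric] ennreal_leI)
  qed
  also have "\<dots> = ennreal (c powr s) * Ih"
    unfolding Ih_def by (rule nn_integral_cmult[OF h_meas])
  also have "\<dots> = ennreal (c powr s * enn2real Ih)"
    using Ih by (simp add: ennreal_mult ennreal_enn2real_if)
  finally have Ig_le: "Ig \<le> ennreal (c powr s * enn2real Ih)" .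
  then have Ig: "Ig \<noteq> top" by (rule neq_top_trans[rotated]) simp
  have "enn2real Ig \<le> enn2real (ennreal (c powr s * enn2real Ih))"
    using Ig_le by (rule enn2real_mono) simp
  then have "enn2real Ig \<le> c powr s * enn2real Ih" by simp
  then have "enn2real Ig powr (1/s) \<le> (c powr s * enn2real Ih) powr (1/s)"
    using s by (intro powr_mono2) auto
  also have "\<dots> = c * enn2real (C_p \<mu> p)"
    using c s Cp_eq Ih by (simp add: powr_mult powr_powr)
  finally show ?thesis
    using p Ig unfolding lp_norm_enn_def Ig_def s_def by (simp add: Let_def ennreal_leI)
qed

text \<open>The \<open>+ 2\<close> absorbs the slack of the essential supremum when \<open>p = \<infinity>\<close>, where \<open>C_p\<close>
  measures \<open>\<parallel>x\<parallel>\<^sub>\<infinity>\<close> rather than \<open>\<parallel>x\<parallel>\<^sub>\<infinity> + 1\<close>.\<close>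

lemma lp_norm_enn_le_C_p:
  fixes \<mu> :: "(real ^ 'i) measure" and g :: "real ^ 'i \<Rightarrow> real"
  assumes sets: "sets \<mu> = sets (restrict_space borel (space \<mu>))"
    and p: "1 \<le> p" and Cp: "C_p \<mu> p < top" and c: "0 \<le> c"
    and g: "\<And>x. 0 \<le> g x \<and> g x \<le> c * (infnorm x + 1)"
  shows "lp_norm_enn \<mu> p g \<le> ennreal (c * (enn2real (C_p \<mu> p) + 2))"
proof (cases "p = top")
  case True
  then show ?thesis using lp_norm_enn_top_le[of \<mu> c g] Cp c g by simp
next
  case False
  then have "lp_norm_enn \<mu> p g \<le> ennreal (c * enn2real (C_p \<mu> p))"
    using lp_norm_enn_finite_le[OF sets p False Cp c g] by simp
  also have "\<dots> \<le> ennreal (c * (enn2real (C_p \<mu> p) + 2))"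
    using c by (intro ennreal_leI mult_left_mono) auto
  finally show ?thesis .
qed

lemma bij_betw_enum_idx: "bij_betw (enum_idx :: nat \<Rightarrow> 'a::finite) {..<CARD('a)} UNIV"
  unfolding enum_idx_def
  using someI_ex[OF ex_bij_betw_nat_finite[of "UNIV::'a set"]] by (simp add: lessThan_atLeast0)

lemma length_vec_to_list [simp]: "length (vec_to_list (x :: real^'i)) = CARD('i)"
  by (simp add: vec_to_list_def)

lemma vec_to_list_nth: "k < CARD('i) \<Longrightarrow> vec_to_list (x :: real^'i) ! k = x $ enum_idx k"
  by (simp add: vec_to_list_def)

lemma list_to_vec_component: "\<exists>k < CARD('o). \<forall>y. (list_to_vec y :: real^'o) $ j = y ! k"
proof -
  have "j \<in> enum_idx ` {..<CARD('o)}"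
    using bij_betw_enum_idx[where 'a='o] by (simp add: bij_betw_def)
  then have "inv_into {..<CARD('o)} enum_idx j \<in> {..<CARD('o)}"
    by (rule inv_into_into)
  then show ?thesis by (auto simp: list_to_vec_def)
qed

lemma norm_fun_zero: "is_norm_fun nrm \<Longrightarrow> nrm 0 = 0"
  by (simp add: is_norm_fun_def)

lemma norm_fun_nonneg:
  assumes "is_norm_fun nrm"
  shows "0 \<le> nrm x"
proof -
  have "nrm ((-1) *\<^sub>R x) = \<bar>-1\<bar> * nrm x"
    using assms unfolding is_norm_fun_def by blast
  then have "nrm (- x) = nrm x" by simp
  moreover have "nrm (x + - x) \<le> nrm x + nrm (- x)"
    using assms unfolding is_norm_fun_def by blast
  ultimately show ?thesis using norm_fun_zero[OF assms] by simp
qed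

lemma norm_fun_sum_le:
  assumes "is_norm_fun nrm" "finite A"
  shows "nrm (\<Sum>a\<in>A. f a) \<le> (\<Sum>a\<in>A. nrm (f a))"
  using assms(2)
proof (induction A rule: finite_induct)
  case empty
  then show ?case using norm_fun_zero[OF assms(1)] by simp
next
  case (insert a A)
  have "nrm (f a + sum f A) \<le> nrm (f a) + nrm (sum f A)"
    using assms(1) unfolding is_norm_fun_def by blast
  then show ?case using insert by simp
qed

lemma norm_fun_le_components:
  fixes nrm :: "real^'o \<Rightarrow> real"
  assumes nrm: "is_norm_fun nrm" and v: "\<And>j. \<bar>v $ j\<bar> \<le> B"
  shows "nrm v \<le> (\<Sum>j\<in>UNIV. nrm (axis j 1)) * B"
proof -
  have "nrm v = nrm (\<Sum>j\<in>UNIV. v $ j *\<^sub>R axis j 1)"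
    using basis_expansion[of v] by (simp add: scalar_mult_eq_scaleR)
  also have "\<dots> \<le> (\<Sum>j\<in>UNIV. nrm (v $ j *\<^sub>R axis j 1))"
    by (rule norm_fun_sum_le[OF nrm]) simp
  also have "\<dots> = (\<Sum>j\<in>UNIV. \<bar>v $ j\<bar> * nrm (axis j 1))"
    using nrm unfolding is_norm_fun_def by simp
  also have "\<dots> \<le> (\<Sum>j\<in>UNIV. B * nrm (axis j 1))"
    using v norm_fun_nonneg[OF nrm] by (intro sum_mono mult_right_mono) auto
  finally show ?thesis by (simp add: sum_distrib_left mult.commute)
qed

lemma realization_perturbation:
  fixes \<theta> \<theta>' :: "(real list list \<times> real list) list" and W0 R \<delta> :: real
    and nrm :: "real^'o \<Rightarrow> real" and x :: "real^'i"
  assumes nrm: "is_norm_fun nrm" and W0: "1 \<le> W0" and R: "0 \<le> R" and \<delta>: "0 \<le> \<delta>"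
    and len: "length \<theta>' = length \<theta>" "length N = length \<theta> + 1"
    and close: "\<forall>l<length \<theta>. layer_close (N!l) (N!Suc l) R \<delta> (\<theta>!l) (\<theta>'!l)"
    and width: "\<forall>l<length N. real (N!l) \<le> W0"
    and N: "N!0 = CARD('i)" "N ! length \<theta> = CARD('o)"
  shows "nrm ((realization \<theta> x :: real^'o) - realization \<theta>' x)
     \<le> (\<Sum>j\<in>UNIV. nrm (axis j 1)) * ((W0*R + W0 + 1) ^ length \<theta> * (length \<theta> * \<delta> * (infnorm x + 1)))"
proof (rule norm_fun_le_components[OF nrm])
  fix j :: 'o
  define y where "y = vec_to_list x"
  have y: "\<forall>k<N!0. \<bar>y!k\<bar> \<le> infnorm x \<and> \<bar>y!k - y!k\<bar> \<le> 0"
    using N by (auto simp: y_def vec_to_list_nth component_le_infnorm_cart)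
  have "length (net_eval \<theta> y) = N ! length \<theta> \<and> length (net_eval \<theta>' y) = N ! length \<theta> \<and>
      (\<forall>i < N ! length \<theta>. \<bar>net_eval \<theta> y ! i - net_eval \<theta>' y ! i\<bar>
         \<le> (W0*R + W0 + 1) ^ length \<theta> * (0 + length \<theta> * \<delta> * (infnorm x + 1)))"
    using N y by (intro net_eval_perturbation[OF W0 R \<delta> len close width]) (auto simp: y_def infnorm_pos_le)
  moreover obtain k where "k < CARD('o)" "\<And>z. (list_to_vec z :: real^'o) $ j = z ! k"
    using list_to_vec_component[of j] by blast
  ultimately show "\<bar>(realization \<theta> x - realization \<theta>' x) $ j\<bar>
      \<le> (W0*R + W0 + 1) ^ length \<theta> * (length \<theta> * \<delta> * (infnorm x + 1))"
    using N by (simp add: realization_def y_def)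
qed

lemma layer_close_of_param_entries:
  assumes arch: "params_of_arch N \<theta>" "params_of_arch N \<theta>'"
    and entries: "\<And>pos. pos \<in> param_positions N \<Longrightarrow> \<bar>param_entry \<theta> pos\<bar> \<le> R \<and>
       \<bar>param_entry \<theta>' pos\<bar> \<le> R \<and> \<bar>param_entry \<theta> pos - param_entry \<theta>' pos\<bar> \<le> \<delta>"
    and l: "l < length \<theta>"
  shows "layer_close (N!l) (N ! Suc l) R \<delta> (\<theta>!l) (\<theta>'!l)"
proof -
  have len: "length \<theta> + 1 = length N" "length \<theta>' + 1 = length N"
    using arch by (simp_all add: params_of_arch_def)
  have l': "l < length \<theta>'" "l + 1 < length N" using l len by simp_all
  have shape: "length (fst (\<theta>!l)) = N ! Suc l" "\<forall>row\<in>set (fst (\<theta>!l)). length row = N!l"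
      "length (snd (\<theta>!l)) = N ! Suc l"
      "length (fst (\<theta>'!l)) = N ! Suc l" "\<forall>row\<in>set (fst (\<theta>'!l)). length row = N!l"
      "length (snd (\<theta>'!l)) = N ! Suc l"
    using arch l l'(1) unfolding params_of_arch_def by auto
  have weight: "\<bar>fst (\<theta>!l) ! i ! j\<bar> \<le> R \<and> \<bar>fst (\<theta>'!l) ! i ! j\<bar> \<le> R \<and>
      \<bar>fst (\<theta>!l) ! i ! j - fst (\<theta>'!l) ! i ! j\<bar> \<le> \<delta>" if "i < N ! Suc l" "j < N!l" for i j
    using entries[of "Inl (l, i, j)"] l'(2) that by (simp add: param_positions_def)
  have bias: "\<bar>snd (\<theta>!l) ! i\<bar> \<le> R \<and> \<bar>snd (\<theta>!l) ! i - snd (\<theta>'!l) ! i\<bar> \<le> \<delta>"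
    if "i < N ! Suc l" for i
    using entries[of "Inr (l, i)"] l'(2) that by (simp add: param_positions_def)
  show ?thesis
    unfolding layer_close_def using shape weight bias by auto
qed

text \<open>The constant \<open>K\<close> in \<open>\<parallel>R\<^sub>\<theta> - R\<^sub>\<theta>\<^sub>'\<parallel>\<^sub>p \<le> K A\<^sup>L (L + 1) \<delta>\<close>; the summand \<open>1\<close> only makes \<open>K \<ge> 1\<close>.\<close>

definition net_dist_const :: "(real ^ 'i) measure \<Rightarrow> ennreal \<Rightarrow> (real ^ 'o \<Rightarrow> real) \<Rightarrow> real" where
  "net_dist_const \<mu> p nrm = (\<Sum>j\<in>UNIV. nrm (axis j 1)) * (enn2real (C_p \<mu> p) + 2) + 1"

lemma net_dist_const_ge_1: "is_norm_fun nrm \<Longrightarrow> 1 \<le> net_dist_const \<mu> p nrm"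
  unfolding net_dist_const_def by (simp add: norm_fun_nonneg sum_nonneg)

lemma lp_dist_realization_le:
  fixes \<mu> :: "(real ^ 'i) measure" and nrm :: "real ^ 'o \<Rightarrow> real" and W :: nat and R \<delta> :: real
  assumes sets: "sets \<mu> = sets (restrict_space borel (space \<mu>))" and p: "1 \<le> p"
    and Cp: "C_p \<mu> p < top" and nrm: "is_norm_fun nrm"
    and arch: "params_of_arch N \<theta>" "params_of_arch N \<theta>'"
    and N: "N!0 = CARD('i)" "N ! (length N - 1) = CARD('o)"
    and len: "length N \<le> L + 1" and width: "\<And>l. l < length N \<Longrightarrow> N!l \<le> W" and W: "1 \<le> W"
    and entries: "\<And>pos. pos \<in> param_positions N \<Longrightarrow> \<bar>param_entry \<theta> pos\<bar> \<le> R \<and>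
       \<bar>param_entry \<theta>' pos\<bar> \<le> R \<and> \<bar>param_entry \<theta> pos - param_entry \<theta>' pos\<bar> \<le> \<delta>"
    and R: "0 \<le> R" and \<delta>: "0 \<le> \<delta>"
  shows "lp_dist \<mu> p nrm (realization \<theta> :: real ^ 'i \<Rightarrow> real ^ 'o) (realization \<theta>')
           \<le> ennreal (net_dist_const \<mu> p nrm * (W*R + W + 1) ^ L * (L + 1) * \<delta>)"
proof -
  define A where "A = W*R + W + 1"
  define Cn where "Cn = (\<Sum>j\<in>UNIV. nrm (axis j 1 :: real ^ 'o))"
  define c where "c = Cn * A ^ L * (L + 1) * \<delta>"
  have A: "1 \<le> A" using R by (simp add: A_def)
  have Cn: "0 \<le> Cn" unfolding Cn_def by (simp add: norm_fun_nonneg[OF nrm] sum_nonneg)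
  have c: "0 \<le> c" unfolding c_def using Cn A \<delta> by simp
  have lens: "length \<theta>' = length \<theta>" "length N = length \<theta> + 1" "length \<theta> \<le> L"
    using arch len by (auto simp: params_of_arch_def)
  have pointwise: "0 \<le> nrm (realization \<theta> x - realization \<theta>' x) \<and>
      nrm (realization \<theta> x - realization \<theta>' x) \<le> c * (infnorm x + 1)" for x :: "real ^ 'i"
  proof
    show "0 \<le> nrm (realization \<theta> x - realization \<theta>' x)" by (rule norm_fun_nonneg[OF nrm])
    have "nrm (realization \<theta> x - realization \<theta>' x)
        \<le> Cn * (A ^ length \<theta> * (length \<theta> * \<delta> * (infnorm x + 1)))"
      unfolding Cn_def A_def
      using layer_close_of_param_entries[OF arch entries] width W R \<delta> N lens
      by (intro realization_perturbation[OF nrm]) auto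
    also have "\<dots> \<le> Cn * (A ^ L * ((L + 1) * \<delta> * (infnorm x + 1)))"
      using A Cn \<delta> lens(3)
      by (intro mult_left_mono mult_mono power_increasing mult_right_mono)
        (auto simp: infnorm_pos_le add_nonneg_nonneg)
    finally show "nrm (realization \<theta> x - realization \<theta>' x) \<le> c * (infnorm x + 1)"
      by (simp add: c_def algebra_simps)
  qed
  have "lp_dist \<mu> p nrm (realization \<theta> :: real ^ 'i \<Rightarrow> real ^ 'o) (realization \<theta>')
      \<le> ennreal (c * (enn2real (C_p \<mu> p) + 2))"
    unfolding lp_dist_def by (rule lp_norm_enn_le_C_p[OF sets p Cp c pointwise])
  also have "c * (enn2real (C_p \<mu> p) + 2) \<le> net_dist_const \<mu> p nrm * A ^ L * (L + 1) * \<delta>"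
    using A \<delta> unfolding c_def net_dist_const_def Cn_def by (simp add: algebra_simps)
  finally show ?thesis unfolding A_def by (simp add: ennreal_leI add.commute)
qed

section \<open>Coverings by quantization\<close>

lemma card_subsets_card_le:
  assumes "finite A"
  shows "card {S. S \<subseteq> A \<and> card S \<le> M} \<le> (M + 1) * (card A + 1) ^ M"
proof -
  have eq: "{S. S \<subseteq> A \<and> card S \<le> M} = (\<Union>k\<in>{..M}. {S. S \<subseteq> A \<and> card S = k})" by auto
  have "card {S. S \<subseteq> A \<and> card S \<le> M} \<le> (\<Sum>k\<le>M. card {S. S \<subseteq> A \<and> card S = k})"
    unfolding eq by (rule card_UN_le) simp
  also have "\<dots> \<le> (\<Sum>k\<le>M. (card A + 1) ^ M)"
  proof (rule sum_mono)
    fix k assume k: "k \<in> {..M}"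
    have "card {S. S \<subseteq> A \<and> card S = k} = card A choose k" by (rule n_subsets[OF assms])
    also have "\<dots> \<le> (card A + 1) ^ k"
      by (cases "k \<le> card A") (auto simp: binomial_eq_0 intro: order_trans[OF binomial_le_pow power_mono])
    also have "\<dots> \<le> (card A + 1) ^ M" using k by (intro power_increasing) auto
    finally show "card {S. S \<subseteq> A \<and> card S = k} \<le> (card A + 1) ^ M" .
  qed
  finally show ?thesis by simp
qed

lemma card_lists_length_le_bound:
  "card {xs. set xs \<subseteq> {..W::nat} \<and> length xs \<le> n} \<le> (n + 1) * (W + 1) ^ n"
proof -
  have "card {xs. set xs \<subseteq> {..W::nat} \<and> length xs \<le> n} = (\<Sum>i\<le>n. (W + 1) ^ i)"
    by (subst card_lists_length_le) auto
  also have "\<dots> \<le> (\<Sum>i\<le>n. (W + 1) ^ n)" by (intro sum_mono power_increasing) auto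
  finally show ?thesis by simp
qed

lemma param_positions_subset:
  assumes "length N \<le> L + 1" "\<And>l. l < length N \<Longrightarrow> N!l \<le> W"
  shows "param_positions N \<subseteq> Inl ` ({..<L} \<times> {..<W} \<times> {..<W}) \<union> Inr ` ({..<L} \<times> {..<W})"
proof
  fix pos assume "pos \<in> param_positions N"
  then consider (weight) l i j where "pos = Inl (l,i,j)" "l + 1 < length N" "i < N ! Suc l" "j < N!l"
    | (bias) l i where "pos = Inr (l,i)" "l + 1 < length N" "i < N ! Suc l"
    unfolding param_positions_def by blast
  then show "pos \<in> Inl ` ({..<L} \<times> {..<W} \<times> {..<W}) \<union> Inr ` ({..<L} \<times> {..<W})"
  proof cases
    case weight
    then have "N ! Suc l \<le> W" "N!l \<le> W" "l < L" using assms by fastforce+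
    then show ?thesis using weight by auto
  next
    case bias
    then have "N ! Suc l \<le> W" "l < L" using assms by fastforce+
    then show ?thesis using bias by auto
  qed
qed

lemma finite_param_positions: "finite (param_positions N)"
  by (rule finite_subset[OF param_positions_subset[of N "length N" "Max (set N)"]])
    (auto intro: Max_ge)

lemma card_param_positions_le:
  assumes "length N \<le> L + 1" "\<And>l. l < length N \<Longrightarrow> N!l \<le> W"
  shows "card (param_positions N) \<le> L * (W + 1)\<^sup>2"
proof -
  have "card (param_positions N)
      \<le> card (Inl ` ({..<L} \<times> {..<W} \<times> {..<W}) \<union> Inr ` ({..<L} \<times> {..<W})
            :: ((nat \<times> nat \<times> nat) + (nat \<times> nat)) set)"
    by (intro card_mono param_positions_subset[OF assms]) auto
  also have "\<dots> \<le> L * (W * W) + L * W"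
    by (rule order_trans[OF card_Un_le]) (simp add: card_image card_cartesian_product)
  also have "\<dots> \<le> L * (W + 1)\<^sup>2" by (simp add: power2_eq_square algebra_simps)
  finally show ?thesis .
qed

lemma abs_diff_le_of_floor_divide_eq:
  fixes a b \<delta> :: real
  assumes "0 < \<delta>" "\<lfloor>a / \<delta>\<rfloor> = \<lfloor>b / \<delta>\<rfloor>"
  shows "\<bar>a - b\<bar> \<le> \<delta>"
proof -
  have "\<bar>a / \<delta> - b / \<delta>\<bar> < 1"
    using assms(2) floor_correct[of "a / \<delta>"] floor_correct[of "b / \<delta>"] by linarith
  then have "\<bar>a - b\<bar> / \<delta> < 1" using assms(1) by (simp add: diff_divide_distrib[symmetric])
  then show ?thesis using assms(1) by (simp add: divide_less_eq)
qed

lemma floor_divide_in_range: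
  fixes e R \<delta> :: real
  assumes "0 < \<delta>" "\<bar>e\<bar> \<le> R"
  shows "\<lfloor>e / \<delta>\<rfloor> \<in> {- int (nat \<lceil>R / \<delta>\<rceil>) .. int (nat \<lceil>R / \<delta>\<rceil>)}"
proof -
  have "- (R / \<delta>) \<le> e / \<delta>" "e / \<delta> \<le> R / \<delta>"
    using assms divide_right_mono[of "- R" e \<delta>] divide_right_mono[of e R \<delta>] by auto
  then have "- \<lceil>R / \<delta>\<rceil> \<le> \<lfloor>e / \<delta>\<rfloor>" "\<lfloor>e / \<delta>\<rfloor> \<le> \<lceil>R / \<delta>\<rceil>"
    by (metis ceiling_le_iff floor_mono floor_minus floor_le_ceiling minus_le_iff order_trans)+
  moreover have "0 \<le> R / \<delta>" using assms by auto
  ultimately show ?thesis by simp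
qed

text \<open>Quantizing the coordinates \<open>e \<theta> s\<close>, \<open>s \<in> S\<close>, to the grid \<open>\<delta> \<int>\<close> and picking one parameter per
  occupied cell gives a covering with at most \<open>2 \<lceil>R / \<delta>\<rceil> + 1\<close> choices per coordinate.\<close>

lemma covering_by_quantization:
  fixes e :: "'p \<Rightarrow> 'k \<Rightarrow> real" and F :: "'p \<Rightarrow> 'f"
  assumes S: "finite S" and \<delta>: "0 < \<delta>"
    and bounded: "\<And>\<theta> s. \<theta> \<in> T \<Longrightarrow> s \<in> S \<Longrightarrow> \<bar>e \<theta> s\<bar> \<le> R"
    and close: "\<And>\<theta> \<theta>'. \<theta> \<in> T \<Longrightarrow> \<theta>' \<in> T \<Longrightarrow> (\<forall>s\<in>S. \<bar>e \<theta> s - e \<theta>' s\<bar> \<le> \<delta>) \<Longrightarrow>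
       d (F \<theta>) (F \<theta>') \<le> ennreal \<epsilon>"
  shows "\<exists>X. is_covering d \<epsilon> X (F ` T) \<and> card X \<le> (2 * nat \<lceil>R / \<delta>\<rceil> + 1) ^ card S"
proof -
  define k where "k = nat \<lceil>R / \<delta>\<rceil>"
  define cell where "cell \<theta> = restrict (\<lambda>s. \<lfloor>e \<theta> s / \<delta>\<rfloor>) S" for \<theta>
  define rep where "rep c = (SOME \<theta>. \<theta> \<in> T \<and> cell \<theta> = c)" for c
  have rep: "rep (cell \<theta>) \<in> T" "cell (rep (cell \<theta>)) = cell \<theta>" if "\<theta> \<in> T" for \<theta>
    using someI_ex[of "\<lambda>\<theta>'. \<theta>' \<in> T \<and> cell \<theta>' = cell \<theta>"] that by (auto simp: rep_def)
  have cells: "cell ` T \<subseteq> PiE S (\<lambda>_. {- int k .. int k})"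
  proof
    fix c assume "c \<in> cell ` T"
    then obtain \<theta> where "\<theta> \<in> T" "c = cell \<theta>" by blast
    then have "\<forall>s\<in>S. \<lfloor>e \<theta> s / \<delta>\<rfloor> \<in> {- int k .. int k}"
      using floor_divide_in_range[OF \<delta> bounded] unfolding k_def by blast
    then show "c \<in> PiE S (\<lambda>_. {- int k .. int k})"
      unfolding \<open>c = cell \<theta>\<close> cell_def by (simp add: restrict_PiE_iff)
  qed
  have finite_cells: "finite (cell ` T)"
    by (rule finite_subset[OF cells]) (simp add: S finite_PiE)
  define X where "X = (F \<circ> rep) ` cell ` T"
  have "is_covering d \<epsilon> X (F ` T)"
    unfolding is_covering_def
  proof (intro conjI ballI)
    show "finite X" using finite_cells by (simp add: X_def)
    show "X \<subseteq> F ` T" using rep(1) by (auto simp: X_def)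
    fix f assume "f \<in> F ` T"
    then obtain \<theta> where \<theta>: "\<theta> \<in> T" "f = F \<theta>" by blast
    have "\<bar>e \<theta> s - e (rep (cell \<theta>)) s\<bar> \<le> \<delta>" if "s \<in> S" for s
      using fun_cong[OF rep(2)[OF \<theta>(1)], of s] that
      by (intro abs_diff_le_of_floor_divide_eq[OF \<delta>]) (simp add: cell_def)
    then have "d f (F (rep (cell \<theta>))) \<le> ennreal \<epsilon>" using close rep(1) \<theta> by blast
    moreover have "F (rep (cell \<theta>)) \<in> X" using \<theta> by (simp add: X_def)
    ultimately show "\<exists>g\<in>X. d f g \<le> ennreal \<epsilon>" by blast
  qed
  moreover have "card X \<le> (2 * k + 1) ^ card S"
  proof -
    have "card X \<le> card (cell ` T)" unfolding X_def by (rule card_image_le[OF finite_cells])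
    also have "\<dots> \<le> card (PiE S (\<lambda>_. {- int k .. int k}))"
      by (rule card_mono[OF _ cells]) (simp add: S finite_PiE)
    also have "\<dots> = (2 * k + 1) ^ card S"
      using S by (simp add: card_PiE nat_add_distrib nat_mult_distrib)
    finally show ?thesis .
  qed
  ultimately show ?thesis unfolding k_def by blast
qed

lemma covering_UN:
  assumes I: "finite I" "card I \<le> n"
    and cov: "\<And>i. i \<in> I \<Longrightarrow> \<exists>X. is_covering d \<epsilon> X (A i) \<and> card X \<le> m"
  shows "\<exists>X. is_covering d \<epsilon> X (\<Union>i\<in>I. A i) \<and> card X \<le> n * m"
proof -
  obtain X where X: "\<And>i. i \<in> I \<Longrightarrow> is_covering d \<epsilon> (X i) (A i) \<and> card (X i) \<le> m"
    using cov by metis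
  have "is_covering d \<epsilon> (\<Union>i\<in>I. X i) (\<Union>i\<in>I. A i)"
    using X I unfolding is_covering_def by blast
  moreover have "card (\<Union>i\<in>I. X i) \<le> card I * m"
    using order_trans[OF card_UN_le[OF I(1)] sum_mono[of I "\<lambda>i. card (X i)" "\<lambda>_. m"]] X by simp
  then have "card (\<Union>i\<in>I. X i) \<le> n * m"
    using I(2) by (meson le_trans mult_le_mono1)
  ultimately show ?thesis by blast
qed

section \<open>Covering the ReLU family\<close>

definition relu_archs :: "nat \<Rightarrow> nat \<Rightarrow> nat \<Rightarrow> nat \<Rightarrow> nat list set" where
  "relu_archs L M d_in d_out = {N. 2 \<le> length N \<and> length N - 1 \<le> L \<and>
     N ! 0 = d_in \<and> N ! (length N - 1) = d_out \<and>
     (\<forall>l. 1 \<le> l \<and> l < length N - 1 \<longrightarrow> 1 \<le> N ! l \<and> N ! l \<le> M)}"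

definition sparse_params ::
  "norm_kind \<Rightarrow> nat list \<Rightarrow> real \<Rightarrow> ((nat \<times> nat \<times> nat) + (nat \<times> nat)) set
     \<Rightarrow> (real list list \<times> real list) list set" where
  "sparse_params q N R S = {\<theta>. params_of_arch N \<theta> \<and> in_param_ball q N R \<theta> \<and> vanishes_outside N \<theta> S}"

lemma relu_family_eq_UN:
  "relu_family q LM r M = (\<Union>N \<in> relu_archs (LM M) M CARD('i) CARD('o).
     \<Union>S \<in> {S. S \<subseteq> param_positions N \<and> card S \<le> M}.
       realization ` sparse_params q N (r M) S :: (real ^ 'i \<Rightarrow> real ^ 'o) set)"
  unfolding relu_family_def relu_archs_def sparse_params_def by blast

lemma relu_family_empty: "LM M = 0 \<Longrightarrow> relu_family q LM r M = {}"
  unfolding relu_family_def by auto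

lemma relu_archs_length: "N \<in> relu_archs L M d_in d_out \<Longrightarrow> length N \<le> L + 1"
  by (auto simp: relu_archs_def)

lemma relu_archs_width:
  assumes "N \<in> relu_archs L M d_in d_out" "l < length N"
  shows "N ! l \<le> M + d_in + d_out"
proof -
  consider "l = 0" | "l = length N - 1" | "1 \<le> l \<and> l < length N - 1" using assms(2) by linarith
  then show ?thesis using assms(1) unfolding relu_archs_def by cases auto
qed

lemma relu_archs_subset_lists:
  "relu_archs L M d_in d_out \<subseteq> {xs. set xs \<subseteq> {..M + d_in + d_out} \<and> length xs \<le> L + 1}"
  using relu_archs_length relu_archs_width by (fastforce simp: in_set_conv_nth)

lemma finite_relu_archs: "finite (relu_archs L M d_in d_out)"
  by (rule finite_subset[OF relu_archs_subset_lists]) (simp add: finite_lists_length_le)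

lemma card_relu_archs_le:
  "card (relu_archs L M d_in d_out) \<le> (L + 2) * (M + d_in + d_out + 1) ^ (L + 1)"
proof -
  have "card (relu_archs L M d_in d_out)
      \<le> card {xs. set xs \<subseteq> {..M + d_in + d_out} \<and> length xs \<le> L + 1}"
    by (rule card_mono[OF _ relu_archs_subset_lists]) (simp add: finite_lists_length_le)
  also have "\<dots> \<le> (L + 1 + 1) * (M + d_in + d_out + 1) ^ (L + 1)"
    by (rule card_lists_length_le_bound)
  finally show ?thesis by simp
qed

lemma card_sparse_supports_le:
  assumes "N \<in> relu_archs L M d_in d_out"
  shows "card {S. S \<subseteq> param_positions N \<and> card S \<le> M}
           \<le> (M + 1) * (L * (M + d_in + d_out + 1)\<^sup>2 + 1) ^ M"
proof -
  have "card (param_positions N) \<le> L * (M + d_in + d_out + 1)\<^sup>2"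
    using assms by (intro card_param_positions_le relu_archs_length relu_archs_width)
  then show ?thesis
    using card_subsets_card_le[OF finite_param_positions, of N M]
    by (meson add_le_mono1 le_trans mult_le_mono2 power_mono zero_le)
qed

lemma sparse_params_covering:
  fixes \<mu> :: "(real ^ 'i) measure" and nrm :: "real ^ 'o \<Rightarrow> real" and R \<delta> :: real
  assumes sets: "sets \<mu> = sets (restrict_space borel (space \<mu>))" and p: "1 \<le> p"
    and Cp: "C_p \<mu> p < top" and nrm: "is_norm_fun nrm" and q: "valid_kind q"
    and N: "N \<in> relu_archs L M CARD('i) CARD('o)" and S: "S \<subseteq> param_positions N" "card S \<le> M"
    and R: "1 \<le> R" and \<delta>: "0 < \<delta>"
  defines "W \<equiv> M + CARD('i) + CARD('o)"
  shows "\<exists>X. is_covering (lp_dist \<mu> p nrm) (net_dist_const \<mu> p nrm * (W * R + W + 1) ^ L * (real L + 1) * \<delta>)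
      X (realization ` sparse_params q N R S :: (real ^ 'i \<Rightarrow> real ^ 'o) set) \<and>
    card X \<le> (2 * nat \<lceil>R / \<delta>\<rceil> + 1) ^ M"
proof -
  have W: "1 \<le> W" unfolding W_def using zero_less_card_finite[where 'a = 'i] by linarith
  have finite_S: "finite S" using S(1) finite_param_positions finite_subset by blast
  have bounded: "\<bar>param_entry \<theta> pos\<bar> \<le> R"
    if "\<theta> \<in> sparse_params q N R S" "pos \<in> param_positions N" for \<theta> pos
    using param_entry_abs_le[OF _ _ q] that by (auto simp: sparse_params_def)
  have close: "lp_dist \<mu> p nrm (realization \<theta>) (realization \<theta>' :: real ^ 'i \<Rightarrow> real ^ 'o)
      \<le> ennreal (net_dist_const \<mu> p nrm * (W * R + W + 1) ^ L * (real L + 1) * \<delta>)"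
    if \<theta>: "\<theta> \<in> sparse_params q N R S" "\<theta>' \<in> sparse_params q N R S"
      and near: "\<forall>s\<in>S. \<bar>param_entry \<theta> s - param_entry \<theta>' s\<bar> \<le> \<delta>" for \<theta> \<theta>'
  proof -
    have arch: "params_of_arch N \<theta>" "params_of_arch N \<theta>'"
      using \<theta> by (simp_all add: sparse_params_def)
    have N_ends: "N ! 0 = CARD('i)" "N ! (length N - 1) = CARD('o)"
      using N by (simp_all add: relu_archs_def)
    have width: "N ! l \<le> W" if "l < length N" for l
      using relu_archs_width[OF N that] by (simp add: W_def)
    have "\<bar>param_entry \<theta> pos - param_entry \<theta>' pos\<bar> \<le> \<delta>" if "pos \<in> param_positions N" for pos
      using near \<theta> that \<delta> by (cases "pos \<in> S") (auto simp: sparse_params_def vanishes_outside_def)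
    then show ?thesis
      using bounded \<theta> R \<delta>
      by (intro lp_dist_realization_le[OF sets p Cp nrm arch N_ends relu_archs_length[OF N] width W])
        simp_all
  qed
  obtain X where X: "is_covering (lp_dist \<mu> p nrm) (net_dist_const \<mu> p nrm * (W * R + W + 1) ^ L * (real L + 1) * \<delta>)
        X (realization ` sparse_params q N R S)" "card X \<le> (2 * nat \<lceil>R / \<delta>\<rceil> + 1) ^ card S"
    using covering_by_quantization[OF finite_S \<delta>, of "sparse_params q N R S" param_entry R
        "lp_dist \<mu> p nrm" realization] bounded S(1) close by blast
  moreover have "(2 * nat \<lceil>R / \<delta>\<rceil> + 1) ^ card S \<le> (2 * nat \<lceil>R / \<delta>\<rceil> + 1) ^ M"
    using S(2) by (intro power_increasing) auto
  ultimately show ?thesis by (meson le_trans)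
qed

text \<open>The step \<open>\<delta>\<close> makes entrywise \<open>\<delta>\<close>-close parameters have \<open>\<epsilon>\<close>-close realizations.\<close>

lemma relu_family_covering:
  fixes \<mu> :: "(real ^ 'i) measure" and nrm :: "real ^ 'o \<Rightarrow> real"
    and LM :: "nat \<Rightarrow> nat" and r :: "nat \<Rightarrow> real" and M :: nat
  assumes sets: "sets \<mu> = sets (restrict_space borel (space \<mu>))" and p: "1 \<le> p"
    and Cp: "C_p \<mu> p < top" and nrm: "is_norm_fun nrm" and q: "valid_kind q"
    and R: "1 \<le> r M" and \<epsilon>: "0 < \<epsilon>"
  defines "W \<equiv> M + CARD('i) + CARD('o)"
  defines "\<delta> \<equiv> \<epsilon> / (net_dist_const \<mu> p nrm * (W * r M + W + 1) ^ LM M * (real (LM M) + 1))"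
  shows "\<exists>X. is_covering (lp_dist \<mu> p nrm) \<epsilon> X (relu_family q LM r M :: (real ^ 'i \<Rightarrow> real ^ 'o) set) \<and>
    card X \<le> (LM M + 2) * (W + 1) ^ (LM M + 1) *
      ((M + 1) * (LM M * (W + 1)\<^sup>2 + 1) ^ M * (2 * nat \<lceil>r M / \<delta>\<rceil> + 1) ^ M)"
proof -
  let ?L = "LM M" and ?K = "net_dist_const \<mu> p nrm" and ?A = "real W * r M + W + 1"
  have K: "1 \<le> ?K" by (rule net_dist_const_ge_1[OF nrm])
  have A: "1 \<le> ?A" using R by simp
  have \<delta>: "0 < \<delta>" unfolding \<delta>_def using \<epsilon> K A by (intro divide_pos_pos mult_pos_pos) auto
  have "?K * ?A ^ ?L * (real ?L + 1) \<noteq> 0" using K A by simp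
  then have K_\<delta>: "?K * ?A ^ ?L * (real ?L + 1) * \<delta> = \<epsilon>"
    unfolding \<delta>_def times_divide_eq_right by (rule nonzero_mult_div_cancel_left)
  show ?thesis
    unfolding relu_family_eq_UN W_def
  proof (rule covering_UN[OF finite_relu_archs card_relu_archs_le])
    fix N assume N: "N \<in> relu_archs ?L M CARD('i) CARD('o)"
    have "finite {S. S \<subseteq> param_positions N \<and> card S \<le> M}"
      by (rule finite_subset[of _ "Pow (param_positions N)"]) (auto simp: finite_param_positions)
    then show "\<exists>X. is_covering (lp_dist \<mu> p nrm) \<epsilon> X
        (\<Union>S\<in>{S. S \<subseteq> param_positions N \<and> card S \<le> M}. realization ` sparse_params q N (r M) S) \<and>
        card X \<le> (M + 1) * (?L * (M + CARD('i) + CARD('o) + 1)\<^sup>2 + 1) ^ M * (2 * nat \<lceil>r M / \<delta>\<rceil> + 1) ^ M"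
      using sparse_params_covering[OF sets p Cp nrm q N _ _ R \<delta>] N
      unfolding K_\<delta>[unfolded W_def] by (intro covering_UN[OF _ card_sparse_supports_le[OF N]]) auto
  qed
qed

section \<open>Size of the covering\<close>

lemma ln_le_ln_add_two:
  fixes W :: nat
  assumes "1 \<le> W"
  shows "1 \<le> ln (real W + 2)" "ln 3 \<le> ln (real W + 2)" "ln (real W + 1) \<le> ln (real W + 2)"
    "ln (real W) \<le> ln (real W + 2)"
proof -
  have "exp 1 \<le> real W + 2" using exp_le assms by linarith
  then show "1 \<le> ln (real W + 2)" by (metis exp_gt_zero ln_exp ln_le_cancel_iff order_less_le_trans)
qed (use assms in auto)

lemma ln_quantization_levels_le:
  fixes L M W :: nat and R K \<gamma> :: real
  assumes M: "1 \<le> M" "M \<le> W" and R: "1 \<le> R" and K: "1 \<le> K" and \<gamma>: "0 \<le> \<gamma>"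
  defines "A \<equiv> real W * R + W + 1"
  defines "\<delta> \<equiv> real M powr - \<gamma> / (K * A ^ L * (real L + 1))"
  defines "u \<equiv> ln (real W + 2)"
  shows "ln (real (2 * nat \<lceil>R / \<delta>\<rceil> + 1)) \<le> ln (5 * K) + ln R + L * (2 * u + ln R) + L + \<gamma> * u"
proof -
  have W: "1 \<le> real W" using M by simp
  have "real W \<le> W * R" using mult_left_mono[OF R, of "real W"] by simp
  then have A: "1 \<le> A" "A \<le> 3 * W * R"
    using W R unfolding A_def by linarith+
  have quot: "R / \<delta> = R * K * A ^ L * (L + 1) * real M powr \<gamma>"
    unfolding \<delta>_def using M by (simp add: powr_minus field_simps)
  have "1 \<le> R * K * A ^ L * (L + 1) * real M powr \<gamma>"
    using R K A M \<gamma> by (intro mult_ge1_I one_le_power ge_one_powr_ge_zero) auto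
  then have quot_ge: "1 \<le> R / \<delta>" unfolding quot .
  have "real (2 * nat \<lceil>R / \<delta>\<rceil> + 1) \<le> 5 * (R / \<delta>)"
    using quot_ge by linarith
  then have "ln (real (2 * nat \<lceil>R / \<delta>\<rceil> + 1)) \<le> ln (5 * (R / \<delta>))"
    by (rule ln_mono[OF _ of_nat_0_less_iff[THEN iffD2]]) simp_all
  also have "\<dots> = ln 5 + (ln R + ln K + L * ln A + ln (real L + 1)) + \<gamma> * ln M"
    unfolding quot using R K A M by (simp add: ln_mult ln_realpow ln_powr)
  also have "\<dots> = ln (5 * K) + ln R + L * ln A + ln (real L + 1) + \<gamma> * ln M"
    using K by (simp add: ln_mult)
  also have "\<dots> \<le> ln (5 * K) + ln R + L * (2 * u + ln R) + L + \<gamma> * u"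
  proof -
    have "ln A \<le> ln (3 * W * R)" using A by (intro ln_mono) auto
    also have "\<dots> = ln 3 + ln W + ln R" using W R by (simp add: ln_mult)
    finally have "ln A \<le> ln 3 + ln W + ln R" .
    then have "ln A \<le> 2 * u + ln R"
      using ln_le_ln_add_two[of W] M unfolding u_def by linarith
    moreover have "ln (real L + 1) \<le> L" using ln_le_minus_one[of "real L + 1"] by simp
    moreover have "ln M \<le> u" using M unfolding u_def by simp
    ultimately show ?thesis using \<gamma> by (intro add_mono mult_left_mono) auto
  qed
  finally show ?thesis .
qed

lemma ln_covering_count:
  fixes L M W k :: nat
  shows "ln (real ((L + 2) * (W + 1) ^ (L + 1) * ((M + 1) * (L * (W + 1)\<^sup>2 + 1) ^ M * (2 * k + 1) ^ M)))
      = ln (real (L + 2)) + (L + 1) * ln (real (W + 1)) + ln (real (M + 1))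
        + M * ln (real (L * (W + 1)\<^sup>2 + 1)) + M * ln (real (2 * k + 1))"
proof -
  define a b c d e where "a = real (L + 2)" and "b = real (W + 1)" and "c = real (M + 1)"
    and "d = real (L * (W + 1)\<^sup>2 + 1)" and "e = real (2 * k + 1)"
  have "0 < a" "0 < b" "0 < c" "0 < d" "0 < e"
    unfolding a_def b_def c_def d_def e_def of_nat_0_less_iff by simp_all
  then have "ln (a * b ^ (L + 1) * (c * d ^ M * e ^ M)) = ln a + (L + 1) * ln b + ln c + M * ln d + M * ln e"
    by (simp add: ln_mult ln_realpow distrib_right)
  then show ?thesis unfolding a_def b_def c_def d_def e_def of_nat_mult of_nat_power .
qed

lemma monomials_le_covering_monomial:
  fixes L M u \<rho> :: real
  assumes L: "1 \<le> L" and M: "1 \<le> M" and u: "1 \<le> u" and \<rho>: "0 \<le> \<rho>"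
  defines "P \<equiv> L * M * (1 + \<rho>) * u"
  shows "1 \<le> P" "L \<le> P" "M \<le> P" "u \<le> P" "L * M \<le> P" "L * u \<le> P" "M * u \<le> P" "M * \<rho> \<le> P"
    "L * M * u \<le> P" "L * M * \<rho> \<le> P"
proof -
  have "L \<le> L * M" "M \<le> L * M" "u \<le> L * u" "L * M \<le> L * M * u" "L * u \<le> L * M * u"
    using L M u by (simp_all add: mult_le_cancel_left1 mult_le_cancel_right1 mult.assoc)
  moreover have "M * u \<le> L * M * u"
    using mult_right_mono[OF L, of "M * u"] M u by (simp add: mult.assoc)
  moreover have "M * \<rho> \<le> L * M * \<rho>"
    using mult_right_mono[OF L, of "M * \<rho>"] M \<rho> by (simp add: mult.assoc)
  moreover have "L * M * \<rho> \<le> L * M * \<rho> * u"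
    using mult_left_mono[OF u, of "L * M * \<rho>"] L M \<rho> by simp
  moreover have "P = L * M * u + L * M * \<rho> * u" "0 \<le> L * M * \<rho> * u"
    using L M u \<rho> by (simp_all add: P_def algebra_simps)
  ultimately show "1 \<le> P" "L \<le> P" "M \<le> P" "u \<le> P" "L * M \<le> P" "L * u \<le> P" "M * u \<le> P" "M * \<rho> \<le> P"
    "L * M * u \<le> P" "L * M * \<rho> \<le> P"
    using L by linarith+
qed

text \<open>All factors of the covering number are absorbed into the single monomial
  \<open>P = L M (1 + ln R) ln (W + 2)\<close>, except for the \<open>M\<^sup>\<gamma>\<close> coming from the covering radius.\<close>

lemma ln_relu_covering_bound:
  fixes L M W k :: nat and R K \<gamma> :: real
  assumes L: "1 \<le> L" and M: "1 \<le> M" "M \<le> W" and R: "1 \<le> R" and K: "1 \<le> K" and \<gamma>: "0 \<le> \<gamma>"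
  defines "u \<equiv> ln (real W + 2)"
  assumes k: "ln (real (2 * k + 1)) \<le> ln (5 * K) + ln R + L * (2 * u + ln R) + L + \<gamma> * u"
  shows "ln (real ((L + 2) * (W + 1) ^ (L + 1) * ((M + 1) * (L * (W + 1)\<^sup>2 + 1) ^ M * (2 * k + 1) ^ M)))
     \<le> (13 + ln (5 * K)) * (real L * real M * (1 + ln R) * u) + \<gamma> * M * u"
proof -
  define \<rho> where "\<rho> = ln R"
  define P where "P = real L * real M * (1 + \<rho>) * u"
  have u: "1 \<le> u" "ln (real W + 1) \<le> u" "ln (real M + 1) \<le> u"
    using ln_le_ln_add_two[of W] M unfolding u_def by auto
  have \<rho>: "0 \<le> \<rho>" using R by (simp add: \<rho>_def)
  have LM: "1 \<le> real L" "1 \<le> real M" using L M by auto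
  note P = monomials_le_covering_monomial[OF LM u(1) \<rho>, folded P_def]
  have "ln (real (L * (W + 1)\<^sup>2 + 1)) \<le> ln ((real L + 1) * (real W + 1)\<^sup>2)"
    by (rule ln_mono[OF _ of_nat_0_less_iff[THEN iffD2]]) (simp_all add: power2_eq_square algebra_simps)
  also have "\<dots> \<le> L + 2 * u"
    using u(2) ln_le_minus_one[of "real L + 1"] by (simp add: ln_mult ln_realpow)
  finally have "M * ln (real (L * (W + 1)\<^sup>2 + 1)) \<le> M * (L + 2 * u)"
    by (intro mult_left_mono) auto
  also have "\<dots> = real L * real M + 2 * (M * u)" by (simp add: algebra_simps)
  finally have widths: "M * ln (real (L * (W + 1)\<^sup>2 + 1)) \<le> 3 * P"
    using P by linarith
  have levels: "M * ln (real (2 * k + 1)) \<le> ln (5 * K) * P + 5 * P + \<gamma> * M * u"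
  proof -
    have "M * ln (real (2 * k + 1)) \<le> M * (ln (5 * K) + \<rho> + L * (2 * u + \<rho>) + L + \<gamma> * u)"
      using k M unfolding \<rho>_def by (intro mult_left_mono) auto
    also have "\<dots> = ln (5 * K) * M + M * \<rho> + 2 * (real L * real M * u) + real L * real M * \<rho> + real L * real M + \<gamma> * M * u"
      by (simp add: algebra_simps)
    also have "\<dots> \<le> ln (5 * K) * P + P + 2 * P + P + P + \<gamma> * M * u"
      using P K \<gamma> by (intro add_mono mult_left_mono) auto
    finally show ?thesis by simp
  qed
  have "ln (real ((L + 2) * (W + 1) ^ (L + 1) * ((M + 1) * (L * (W + 1)\<^sup>2 + 1) ^ M * (2 * k + 1) ^ M)))
      = ln (real (L + 2)) + (L + 1) * ln (real (W + 1)) + ln (real (M + 1))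
        + M * ln (real (L * (W + 1)\<^sup>2 + 1)) + M * ln (real (2 * k + 1))"
    by (rule ln_covering_count)
  also have "\<dots> = ln (real L + 2) + (L + 1) * ln (real W + 1) + ln (real M + 1)
        + M * ln (real (L * (W + 1)\<^sup>2 + 1)) + M * ln (real (2 * k + 1))"
    by (simp add: add.commute)
  also have "\<dots> \<le> 2 * P + 2 * P + P + 3 * P + (ln (5 * K) * P + 5 * P + \<gamma> * M * u)"
  proof -
    have "ln (real L + 2) \<le> real L + 1" using ln_le_minus_one[of "real L + 2"] by simp
    then have "ln (real L + 2) \<le> 2 * P" using P LM by linarith
    moreover have "(L + 1) * ln (real W + 1) \<le> 2 * P"
      using u P mult_left_mono[OF u(2), of "real L + 1"] by (simp add: algebra_simps)
    ultimately show ?thesis using u(3) P widths levels by linarith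
  qed
  finally show ?thesis by (simp add: P_def \<rho>_def algebra_simps)
qed

section \<open>Encodability\<close>

lemma bigo_powr_bound:
  fixes f :: "nat \<Rightarrow> real"
  assumes "f \<in> O(\<lambda>M. real M powr a)" "0 \<le> a"
  shows "\<exists>C>0. \<forall>M\<ge>1. \<bar>f M\<bar> \<le> C * real M powr a"
proof -
  obtain c where c: "0 < c" "eventually (\<lambda>M. norm (f M) \<le> c * norm (real M powr a)) at_top"
    using landau_o.bigE[OF assms(1)] by blast
  then obtain N where N: "\<And>M. N \<le> M \<Longrightarrow> \<bar>f M\<bar> \<le> c * real M powr a"
    by (auto simp: eventually_at_top_linorder)
  define C where "C = c + (\<Sum>j<N. \<bar>f j\<bar>)"
  have C: "c \<le> C" "(\<Sum>j<N. \<bar>f j\<bar>) \<le> C" using c(1) by (auto simp: C_def sum_nonneg)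
  have "\<bar>f M\<bar> \<le> C * real M powr a" if M: "1 \<le> M" for M
  proof -
    have one: "1 \<le> real M powr a" using M assms(2) by (simp add: ge_one_powr_ge_zero)
    show ?thesis
    proof (cases "N \<le> M")
      case True
      then show ?thesis using N[OF True] mult_right_mono[OF C(1), of "real M powr a"] by simp
    next
      case False
      then have "\<bar>f M\<bar> \<le> (\<Sum>j<N. \<bar>f j\<bar>)" by (intro member_le_sum) auto
      moreover have "C \<le> C * real M powr a"
        using mult_left_mono[OF one, of C] C(1) c(1) by simp
      ultimately show ?thesis using C(2) by linarith
    qed
  qed
  then show ?thesis using C(1) c(1) by (intro exI[of _ C]) auto
qed

lemma ln_add_le_powr:
  fixes c h :: real and M :: nat
  assumes c: "1 \<le> c" and h: "0 < h" and M: "1 \<le> M"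
  shows "ln (real M + c) \<le> (ln (2 * c) + 1 / h) * real M powr h"
proof -
  have one: "1 \<le> real M powr h" using M h by (simp add: ge_one_powr_ge_zero)
  have "real M \<le> c * real M" "c \<le> c * real M"
    using c M by (simp_all add: mult_le_cancel_right1 mult_le_cancel_left1)
  then have "real M + c \<le> 2 * c * real M" by simp
  then have "ln (real M + c) \<le> ln (2 * c * real M)"
    using c M by (intro ln_mono) auto
  also have "\<dots> = ln (2 * c) + ln (real M)"
    using c M by (simp add: ln_mult)
  also have "ln (real M) \<le> real M powr h / h"
    using ln_le_minus_one[of "real M powr h"] M h by (simp add: ln_powr pos_le_divide_eq mult.commute)
  also have "ln (2 * c) \<le> ln (2 * c) * real M powr h"
    using one c by (simp add: mult_le_cancel_left1)
  finally show ?thesis by (simp add: algebra_simps)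
qed

lemma ln_le_log2: "1 \<le> x \<Longrightarrow> ln x \<le> log 2 x"
  by (simp add: log_def pos_le_divide_eq mult_left_le ln_le_minus_one[of 2, simplified])

lemma is_encodingI:
  assumes C: "0 < C"
    and cov: "\<And>M. 1 \<le> M \<Longrightarrow>
       \<exists>X. is_covering d (C * real M powr - \<gamma>) X (\<Sigma> M) \<and> ln (real (card X)) \<le> c * real M powr (1 + h)"
  shows "\<exists>E. is_encoding d \<Sigma> \<gamma> h E"
proof -
  obtain E where E: "\<And>M. 1 \<le> M \<Longrightarrow>
      is_covering d (C * real M powr - \<gamma>) (E M) (\<Sigma> M) \<and> ln (real (card (E M))) \<le> c * real M powr (1 + h)"
    using cov by metis
  define c2 where "c2 = \<bar>c\<bar> / ln 2 + 1"
  have "log 2 (real (card (E M))) \<le> c2 * real M powr (1 + h)" if "1 \<le> M" for M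
  proof -
    have "log 2 (real (card (E M))) \<le> c * real M powr (1 + h) / ln 2"
      using E[OF that] by (simp add: log_def divide_right_mono)
    also have "\<dots> \<le> c2 * real M powr (1 + h)"
    proof -
      have le: "c * real M powr (1 + h) / ln 2 \<le> \<bar>c\<bar> * real M powr (1 + h) / ln 2"
        by (intro divide_right_mono mult_right_mono) auto
      have "c2 * real M powr (1 + h) = \<bar>c\<bar> * real M powr (1 + h) / ln 2 + real M powr (1 + h)"
        by (simp add: c2_def algebra_simps)
      then show ?thesis by (simp add: order_trans[OF le])
    qed
    finally show ?thesis .
  qed
  moreover have "0 < c2" by (simp add: c2_def add_nonneg_pos)
  ultimately show ?thesis
    unfolding is_encoding_def using C E by blast
qed

lemma relu_family_covering_ln_card:
  fixes \<mu> :: "(real ^ 'i) measure" and nrm :: "real ^ 'o \<Rightarrow> real"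
    and LM :: "nat \<Rightarrow> nat" and r :: "nat \<Rightarrow> real" and M :: nat and u :: real
  assumes sets: "sets \<mu> = sets (restrict_space borel (space \<mu>))" and p: "1 \<le> p"
    and Cp: "C_p \<mu> p < top" and nrm: "is_norm_fun nrm" and q: "valid_kind q"
    and R: "1 \<le> r M" and M: "1 \<le> M" and L: "1 \<le> LM M" and \<gamma>: "0 \<le> \<gamma>"
  defines "u \<equiv> ln (real (M + CARD('i) + CARD('o)) + 2)"
  shows "\<exists>X. is_covering (lp_dist \<mu> p nrm) (real M powr - \<gamma>) X
      (relu_family q LM r M :: (real ^ 'i \<Rightarrow> real ^ 'o) set) \<and>
    ln (real (card X)) \<le> (13 + ln (5 * net_dist_const \<mu> p nrm)) * (real (LM M) * real M * (1 + ln (r M)) * u) + \<gamma> * M * u"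
proof -
  let ?W = "M + CARD('i) + CARD('o)" and ?K = "net_dist_const \<mu> p nrm"
  define \<delta> where "\<delta> = real M powr - \<gamma> / (?K * (?W * r M + ?W + 1) ^ LM M * (real (LM M) + 1))"
  define B where "B = (LM M + 2) * (?W + 1) ^ (LM M + 1) *
      ((M + 1) * (LM M * (?W + 1)\<^sup>2 + 1) ^ M * (2 * nat \<lceil>r M / \<delta>\<rceil> + 1) ^ M)"
  have K: "1 \<le> ?K" by (rule net_dist_const_ge_1[OF nrm])
  obtain X where X: "is_covering (lp_dist \<mu> p nrm) (real M powr - \<gamma>) X
      (relu_family q LM r M :: (real ^ 'i \<Rightarrow> real ^ 'o) set)" "card X \<le> B"
    using relu_family_covering[where LM = LM and r = r and M = M and \<epsilon> = "real M powr - \<gamma>",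
        OF sets p Cp nrm q R] M
    unfolding B_def \<delta>_def by auto
  have levels: "ln (real (2 * nat \<lceil>r M / \<delta>\<rceil> + 1))
      \<le> ln (5 * ?K) + ln (r M) + LM M * (2 * u + ln (r M)) + LM M + \<gamma> * u"
    unfolding \<delta>_def u_def by (rule ln_quantization_levels_le) (use M R K \<gamma> in auto)
  have "0 < B" unfolding B_def by simp
  then have "ln (real (card X)) \<le> ln (real B)"
    using X(2) by (cases "card X = 0") (simp_all add: ln_mono)
  also have "\<dots> \<le> (13 + ln (5 * ?K)) * (real (LM M) * real M * (1 + ln (r M)) * u) + \<gamma> * M * u"
    unfolding B_def u_def
    by (rule ln_relu_covering_bound[OF L M _ R K \<gamma> levels[unfolded u_def]]) simp
  finally show ?thesis using X(1) by blast
qed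

lemma absorb_log_factors:
  fixes P T u C cu \<kappa> \<gamma> h :: real and M :: nat
  assumes P: "P \<le> T * u" and T: "T \<le> C * real M powr (1 + h)"
    and u: "0 \<le> u" "u \<le> cu * real M powr h"
    and M: "1 \<le> M" and nonneg: "0 \<le> C" "0 \<le> cu" "0 \<le> \<kappa>" "0 \<le> \<gamma>" "0 \<le> h"
  shows "\<kappa> * P + \<gamma> * M * u \<le> (\<kappa> * C + \<gamma>) * cu * real M powr (1 + 2 * h)"
proof -
  have split: "real M powr (1 + 2 * h) = real M powr (1 + h) * real M powr h"
    using M by (simp add: powr_add[symmetric] add.commute)
  have "P \<le> C * real M powr (1 + h) * (cu * real M powr h)"
    using order_trans[OF P mult_mono[OF T u(2)]] nonneg u(1) by simp
  then have "P \<le> C * cu * real M powr (1 + 2 * h)" unfolding split by (simp add: mult_ac)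
  moreover have "M * u \<le> cu * real M powr (1 + 2 * h)"
  proof -
    have "M * u \<le> real M powr 1 * (cu * real M powr h)" using u M by (simp add: mult_left_mono)
    also have "\<dots> \<le> real M powr (1 + h) * (cu * real M powr h)"
      using M nonneg by (intro mult_right_mono powr_mono) auto
    finally show ?thesis unfolding split by (simp add: mult_ac)
  qed
  ultimately have "\<kappa> * P + \<gamma> * (M * u) \<le> \<kappa> * (C * cu * real M powr (1 + 2 * h)) + \<gamma> * (cu * real M powr (1 + 2 * h))"
    using nonneg by (intro add_mono mult_left_mono)
  then show ?thesis by (simp add: algebra_simps)
qed

lemma relu_family_log_covering_number:
  fixes \<mu> :: "(real ^ 'i) measure" and nrm :: "real ^ 'o \<Rightarrow> real"
    and LM :: "nat \<Rightarrow> nat" and r :: "nat \<Rightarrow> real" and h \<gamma> :: real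
  assumes sets: "sets \<mu> = sets (restrict_space borel (space \<mu>))" and p: "1 \<le> p"
    and Cp: "C_p \<mu> p < top" and nrm: "is_norm_fun nrm" and q: "valid_kind q"
    and R: "\<And>M. 1 \<le> r M"
    and growth: "(\<lambda>M. real (LM M) * real M * (1 + log 2 (r M))) \<in> O(\<lambda>M. real M powr (1 + h))"
    and h: "0 < h" and \<gamma>: "0 < \<gamma>"
  shows "\<exists>c. \<forall>M\<ge>1. \<exists>X. is_covering (lp_dist \<mu> p nrm) (real M powr - \<gamma>) X
      (relu_family q LM r M :: (real ^ 'i \<Rightarrow> real ^ 'o) set) \<and> ln (real (card X)) \<le> c * real M powr (1 + 2 * h)"
proof -
  obtain C where C: "0 < C" "\<And>M. 1 \<le> M \<Longrightarrow> real (LM M) * real M * (1 + log 2 (r M)) \<le> C * real M powr (1 + h)"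
    using bigo_powr_bound[OF growth] h by force
  define \<kappa> where "\<kappa> = 13 + ln (5 * net_dist_const \<mu> p nrm)"
  define d where "d = real (CARD('i) + CARD('o)) + 2"
  define cu where "cu = ln (2 * d) + 1 / h"
  have "0 \<le> ln (5 * net_dist_const \<mu> p nrm)"
    using net_dist_const_ge_1[OF nrm, of \<mu> p] by (intro ln_ge_zero) simp
  then have \<kappa>: "0 \<le> \<kappa>" by (simp add: \<kappa>_def)
  have d: "1 \<le> d" by (simp add: d_def)
  have cu: "0 \<le> cu" using d h by (simp add: cu_def)
  have "\<exists>X. is_covering (lp_dist \<mu> p nrm) (real M powr - \<gamma>) X (relu_family q LM r M) \<and>
      ln (real (card X)) \<le> (\<kappa> * C + \<gamma>) * cu * real M powr (1 + 2 * h)" if M: "1 \<le> M" for M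
  proof (cases "LM M = 0")
    case True
    then show ?thesis using C \<kappa> \<gamma> cu by (simp add: relu_family_empty is_covering_def)
  next
    case False
    define u where "u = ln (real (M + CARD('i) + CARD('o)) + 2)"
    have u: "0 \<le> u" "u \<le> cu * real M powr h"
      using ln_add_le_powr[OF d h M] by (simp_all add: u_def cu_def d_def add.assoc)
    obtain X where X: "is_covering (lp_dist \<mu> p nrm) (real M powr - \<gamma>) X (relu_family q LM r M)"
        "ln (real (card X)) \<le> \<kappa> * (real (LM M) * real M * (1 + ln (r M)) * u) + \<gamma> * M * u"
      using relu_family_covering_ln_card[where LM = LM and r = r and M = M,
          OF sets p Cp nrm q R M _ less_imp_le[OF \<gamma>]] False
      unfolding \<kappa>_def u_def by auto
    have "real (LM M) * real M * (1 + ln (r M)) * u \<le> real (LM M) * real M * (1 + log 2 (r M)) * u"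
      using ln_le_log2[OF R] u(1) by (intro mult_right_mono mult_left_mono) auto
    then have "\<kappa> * (real (LM M) * real M * (1 + ln (r M)) * u) + \<gamma> * M * u
        \<le> (\<kappa> * C + \<gamma>) * cu * real M powr (1 + 2 * h)"
      using C u M \<kappa> \<gamma> h cu by (intro absorb_log_factors) auto
    then show ?thesis using X by auto
  qed
  then show ?thesis by blast
qed

theorem mainTheorem17:
  fixes \<mu> :: "(real ^ 'i) measure"
    and p :: ennreal
    and nrm :: "real ^ 'o \<Rightarrow> real"
    and q :: norm_kind
    and LM :: "nat \<Rightarrow> nat"
    and r :: "nat \<Rightarrow> real"
  assumes "sets \<mu> = sets (restrict_space borel (space \<mu>))"
    and "1 \<le> p"
    and "is_norm_fun nrm"
    and "C_p \<mu> p < top"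
    and "valid_kind q"
    and "\<And>M. 1 \<le> r M"
    and "\<And>h. h > 0 \<Longrightarrow>
           (\<lambda>M. real (LM M) * real M * (1 + log 2 (r M))) \<in> O(\<lambda>M. real M powr (1 + h))"
  shows "inf_encodable (lp_dist \<mu> p nrm) (\<lambda>M. relu_family q LM r M :: (real ^ 'i \<Rightarrow> real ^ 'o) set)"
  unfolding inf_encodable_def gamma_encodable_def
proof (intro allI impI)
  fix \<gamma> h :: real
  assume \<gamma>: "0 < \<gamma>" and "0 < h"
  then have h: "0 < h / 2" by simp
  obtain c where "\<forall>M\<ge>1. \<exists>X. is_covering (lp_dist \<mu> p nrm) (real M powr - \<gamma>) X
      (relu_family q LM r M :: (real ^ 'i \<Rightarrow> real ^ 'o) set) \<and> ln (real (card X)) \<le> c * real M powr (1 + h)"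
    using relu_family_log_covering_number[OF assms(1,2,4,3,5,6) assms(7)[OF h] h \<gamma>] by auto
  then show "\<exists>E. is_encoding (lp_dist \<mu> p nrm) (\<lambda>M. relu_family q LM r M) \<gamma> h E"
    by (intro is_encodingI[where C = 1]) auto
qed

end
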